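(* Let $Q$ be a finite acyclic quiver with automorphism $\sigma$ and let $\alpha\in\mathcal F_{Q,\sigma}$. Then every primitive element $x\in\mathcal H_v(Q,\sigma)^{\rm prim}_\alpha$ satisfies $\mathbb I_\alpha(x)=\{x,\mathbf 1_\alpha\}=0$; that is, $\mathcal H_v(Q,\sigma)^{\rm prim}_\alpha\subseteq\operatorname{Ker}\mathbb I_\alpha$.
   Context: Let $Q=(Q_0,Q_1)$ be a finite quiver and $\sigma$ an automorphism of $Q$ (a permutation of vertices and arrows compatible with heads and tails). Let $\mathbb F_q$ be a finite field, $\overline{\mathbb F}_q$ its algebraic closure, $F:\overline{\mathbb F}_qQ\to\overline{\mathbb F}_qQ$, $\sum_sx_sp_s\mapsto\sum_sx_s^q\sigma(p_s)$, and $A=\mathfrak A(Q,\sigma;q)=\{a:F(a)=a\}$ (a hereditary $\mathbb F_q$-algebra, finite-dimensional when $Q$ is acyclic). Let $I$ be the set of $\sigma$-orbits of vertices, $\Gamma_1$ the set of $\sigma$-orbits of arrows, $\varepsilon_i,\varepsilon_\rho$ the orbit sizes, and $t\rho,h\rho\in I$ the tail/head orbits of $\rho\in\Gamma_1$; $\Gamma=\Gamma(Q,\sigma)$ is the valued quiver with vertices $I$ and arrows $\Gamma_1$. Euler form: $\langle x,y\rangle=\sum_i\varepsilon_ix_iy_i-\sum_{\rho\in\Gamma_1}\varepsilon_\rho x_{t\rho}y_{h\rho}$ on $\mathbb ZI$; symmetric Euler form $(x,y)=\langle x,y\rangle+\langle y,x\rangle$. The dimension vector of an $A$-module $M$ is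 $\mathbf{dim}M=\sum_i(\dim_{\mathbb F_{q^{\varepsilon_i}}}e_iM)i$, $e_i$ the idempotent of $A$ for $i\in I$. The fundamental set is $\mathcal F_{Q,\sigma}=\{\mu\in\mathbb NI:$ the full subquiver of $\Gamma$ on $\{i:\mu_i\ne0\}$ is connected and $(\mu,i)\le0$ for all $i\in I\}$. With $F^L_{M,N}$ the number of submodules $X\subseteq L$ with $X\cong N$, $L/X\cong M$, $a_M=|\mathrm{Aut}_A(M)|$ and $v=\sqrt q$, the Ringel–Hall algebra $\mathcal H_v(Q,\sigma)$ has $\mathbb C$-basis the isoclasses $[M]$ of finite-dimensional $A$-modules, product $[M][N]=\sum_{[L]}v^{\langle\mathbf{dim}M,\mathbf{dim}N\rangle}F^L_{M,N}[L]$, coproduct $\Delta([M])=\sum_{[X],[Y]}v^{\langle\mathbf{dim}X,\mathbf{dim}Y\rangle}\frac{a_Xa_Y}{a_M}F^M_{X,Y}[X]\otimes[Y]$, unit $1=[0]$, and $\mathbb NI$-grading by dimension vectors. $\mathcal H_v(Q,\sigma)^{\rm prim}_{\mathbf d}=\{x\in\mathcal H_v(Q,\sigma)_{\mathbf d}:\Delta(x)=x\otimes1+1\otimes x\}$. The Green form is $\{[M],[N]\}=\delta_{[M],[N]}/a_M$. Put $\mathbf 1_{\mathbf d}=\sum_{[M]:\mathbf{dim}M=\mathbf d}[M]$ and $\mathbb I_{\mathbf d}:\mathcal H_v(Q,\sigma)_{\mathbf d}\to\mathbb C$, $[M]\mapsto 1/a_M$, so $\mathbb I_{\mathbf d}(x)=\{x,\mathbf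 1_{\mathbf d}\}$. *)

theory Defs
  imports Complex_Main "HOL-Library.FuncSet" "HOL-Computational_Algebra.Primes"
begin

section \<open>Quivers, paths and the algebra A = A(Q,sigma;q)\<close>

text \<open>A path is (start vertex, list of arrows in order
  of traversal); the trivial path at v is (v, []).\<close>

type_synonym ('v,'e) qpath = "'v \<times> 'e list"

fun pvalid :: "('e \<Rightarrow> 'v) \<Rightarrow> ('e \<Rightarrow> 'v) \<Rightarrow> 'v \<Rightarrow> 'e list \<Rightarrow> bool" where
  "pvalid src tgt v [] = True"
| "pvalid src tgt v (a # as) = (src a = v \<and> pvalid src tgt (tgt a) as)"

fun pend :: "('e \<Rightarrow> 'v) \<Rightarrow> 'v \<Rightarrow> 'e list \<Rightarrow> 'v" where
  "pend tgt v [] = v"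
| "pend tgt v (a # as) = pend tgt (tgt a) as"

definition Paths :: "('e \<Rightarrow> 'v) \<Rightarrow> ('e \<Rightarrow> 'v) \<Rightarrow> ('v,'e) qpath set" where
  "Paths src tgt = {(v, as). pvalid src tgt v as}"

definition quiver_acyclic :: "('e \<Rightarrow> 'v) \<Rightarrow> ('e \<Rightarrow> 'v) \<Rightarrow> bool" where
  "quiver_acyclic src tgt \<longleftrightarrow>
     (\<forall>v as. pvalid src tgt v as \<and> as \<noteq> [] \<longrightarrow> pend tgt v as \<noteq> v)"

definition quiver_aut :: "('e \<Rightarrow> 'v) \<Rightarrow> ('e \<Rightarrow> 'v) \<Rightarrow> ('v \<Rightarrow> 'v) \<Rightarrow> ('e \<Rightarrow> 'e) \<Rightarrow> bool" where
  "quiver_aut src tgt sv se \<longleftrightarrow> bij sv \<and> bij se \<and>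
     (\<forall>a. src (se a) = sv (src a) \<and> tgt (se a) = sv (tgt a))"

text \<open>Elements of the path algebra KQ over a field K: functions from paths to K,
  vanishing outside the set of valid paths (finitely many, Q acyclic).
  Multiplication: r * s = "first s, then r" (so left modules are representations of Q).\<close>

definition pa_add :: "('p \<Rightarrow> 'k::field) \<Rightarrow> ('p \<Rightarrow> 'k) \<Rightarrow> 'p \<Rightarrow> 'k" where
  "pa_add x y = (\<lambda>p. x p + y p)"

definition pa_mult :: "('e \<Rightarrow> 'v) \<Rightarrow> ('e \<Rightarrow> 'v) \<Rightarrow> (('v,'e) qpath \<Rightarrow> 'k::field)
    \<Rightarrow> (('v,'e) qpath \<Rightarrow> 'k) \<Rightarrow> ('v,'e) qpath \<Rightarrow> 'k" where
  "pa_mult src tgt x y = (\<lambda>p. \<Sum>(r, s) \<in> {(r, s). r \<in> Paths src tgt \<and> s \<in> Paths src tgt \<and>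
        pend tgt (fst s) (snd s) = fst r \<and> (fst s, snd s @ snd r) = p}. x r * y s)"

definition pa_one :: "('v,'e) qpath \<Rightarrow> 'k::field" where
  "pa_one = (\<lambda>p. if snd p = [] then 1 else 0)"

definition psig :: "('v \<Rightarrow> 'v) \<Rightarrow> ('e \<Rightarrow> 'e) \<Rightarrow> ('v,'e) qpath \<Rightarrow> ('v,'e) qpath" where
  "psig sv se p = (sv (fst p), map se (snd p))"

text \<open>A = {a : F(a) = a} with F(sum x_p p) = sum x_p^q sigma(p), i.e. x(sigma p) = (x p)^q.\<close>
definition Alg :: "('e \<Rightarrow> 'v) \<Rightarrow> ('e \<Rightarrow> 'v) \<Rightarrow> ('v \<Rightarrow> 'v) \<Rightarrow> ('e \<Rightarrow> 'e) \<Rightarrow> nat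
    \<Rightarrow> (('v,'e) qpath \<Rightarrow> 'k::field) set" where
  "Alg src tgt sv se q = {x. (\<forall>p. p \<notin> Paths src tgt \<longrightarrow> x p = 0) \<and>
                            (\<forall>p. x (psig sv se p) = x p ^ q)}"

record ('r, 'm) amod =
  mcar :: "'m set"
  madd :: "'m \<Rightarrow> 'm \<Rightarrow> 'm"
  mzero :: "'m"
  msmult :: "'r \<Rightarrow> 'm \<Rightarrow> 'm"

text \<open>Finite-dimensional (equivalently: finite, as A and F_q are finite) left A-modules.\<close>
definition is_amod :: "('e \<Rightarrow> 'v) \<Rightarrow> ('e \<Rightarrow> 'v) \<Rightarrow> ('v \<Rightarrow> 'v) \<Rightarrow> ('e \<Rightarrow> 'e) \<Rightarrow> nat
    \<Rightarrow> (('v,'e) qpath \<Rightarrow> 'k::field, 'm) amod \<Rightarrow> bool" where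
  "is_amod src tgt sv se q M \<longleftrightarrow>
     (let A = Alg src tgt sv se q in
     finite (mcar M) \<and> mzero M \<in> mcar M \<and>
     (\<forall>x\<in>mcar M. \<forall>y\<in>mcar M. madd M x y \<in> mcar M) \<and>
     (\<forall>x\<in>mcar M. \<forall>y\<in>mcar M. \<forall>z\<in>mcar M. madd M (madd M x y) z = madd M x (madd M y z)) \<and>
     (\<forall>x\<in>mcar M. \<forall>y\<in>mcar M. madd M x y = madd M y x) \<and>
     (\<forall>x\<in>mcar M. madd M (mzero M) x = x) \<and>
     (\<forall>x\<in>mcar M. \<exists>y\<in>mcar M. madd M x y = mzero M) \<and>
     (\<forall>a\<in>A. \<forall>x\<in>mcar M. msmult M a x \<in> mcar M) \<and>
     (\<forall>a\<in>A. \<forall>x\<in>mcar M. \<forall>y\<in>mcar M.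
         msmult M a (madd M x y) = madd M (msmult M a x) (msmult M a y)) \<and>
     (\<forall>a\<in>A. \<forall>b\<in>A. \<forall>x\<in>mcar M. msmult M (pa_add a b) x = madd M (msmult M a x) (msmult M b x)) \<and>
     (\<forall>a\<in>A. \<forall>b\<in>A. \<forall>x\<in>mcar M. msmult M (pa_mult src tgt a b) x = msmult M a (msmult M b x)) \<and>
     (\<forall>x\<in>mcar M. msmult M pa_one x = x))"

definition amod_iso :: "'r set \<Rightarrow> ('r, 'm) amod \<Rightarrow> ('r, 'n) amod \<Rightarrow> ('m \<Rightarrow> 'n) \<Rightarrow> bool" where
  "amod_iso A M N f \<longleftrightarrow> bij_betw f (mcar M) (mcar N) \<and>
     (\<forall>x\<in>mcar M. \<forall>y\<in>mcar M. f (madd M x y) = madd N (f x) (f y)) \<and>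
     (\<forall>a\<in>A. \<forall>x\<in>mcar M. f (msmult M a x) = msmult N a (f x))"

definition amod_isom :: "'r set \<Rightarrow> ('r, 'm) amod \<Rightarrow> ('r, 'n) amod \<Rightarrow> bool" where
  "amod_isom A M N \<longleftrightarrow> (\<exists>f. amod_iso A M N f)"

definition aut_num :: "'r set \<Rightarrow> ('r, 'm) amod \<Rightarrow> nat" where
  "aut_num A M = card {f \<in> mcar M \<rightarrow>\<^sub>E mcar M. amod_iso A M M f}"

definition submod :: "'r set \<Rightarrow> ('r, 'm) amod \<Rightarrow> 'm set \<Rightarrow> bool" where
  "submod A L X \<longleftrightarrow> X \<subseteq> mcar L \<and> mzero L \<in> X \<and>
     (\<forall>x\<in>X. \<forall>y\<in>X. madd L x y \<in> X) \<and>
     (\<forall>x\<in>X. \<exists>y\<in>X. madd L x y = mzero L) \<and>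
     (\<forall>a\<in>A. \<forall>x\<in>X. msmult L a x \<in> X)"

definition mcoset :: "('r, 'm) amod \<Rightarrow> 'm set \<Rightarrow> 'm \<Rightarrow> 'm set" where
  "mcoset L X x = madd L x ` X"

definition quotmod :: "('r, 'm) amod \<Rightarrow> 'm set \<Rightarrow> ('r, 'm set) amod" where
  "quotmod L X = \<lparr> mcar = mcoset L X ` mcar L,
      madd = (\<lambda>C D. mcoset L X (madd L (SOME c. c \<in> C) (SOME d. d \<in> D))),
      mzero = mcoset L X (mzero L),
      msmult = (\<lambda>a C. mcoset L X (msmult L a (SOME c. c \<in> C))) \<rparr>"

definition hall_num :: "'r set \<Rightarrow> ('r, 'm) amod \<Rightarrow> ('r, 'n) amod \<Rightarrow> ('r, 'p) amod \<Rightarrow> nat" where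
  "hall_num A L M N = card {X. submod A L X \<and> amod_isom A (L\<lparr>mcar := X\<rparr>) N \<and>
                               amod_isom A (quotmod L X) M}"

section \<open>The valued quiver Gamma, dimension vectors, Euler form, fundamental set\<close>

definition vorb :: "('v \<Rightarrow> 'v) \<Rightarrow> 'v \<Rightarrow> 'v set" where
  "vorb sv v = {(sv ^^ n) v | n. True}"

definition eorb :: "('e \<Rightarrow> 'e) \<Rightarrow> 'e \<Rightarrow> 'e set" where
  "eorb se a = {(se ^^ n) a | n. True}"

definition Iset :: "('v \<Rightarrow> 'v) \<Rightarrow> 'v set set" where
  "Iset sv = range (vorb sv)"

definition Gam1 :: "('e \<Rightarrow> 'e) \<Rightarrow> 'e set set" where
  "Gam1 se = range (eorb se)"

definition torb :: "('e \<Rightarrow> 'v) \<Rightarrow> ('v \<Rightarrow> 'v) \<Rightarrow> 'e set \<Rightarrow> 'v set" where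
  "torb src sv \<rho> = vorb sv (src (SOME a. a \<in> \<rho>))"

definition horb :: "('e \<Rightarrow> 'v) \<Rightarrow> ('v \<Rightarrow> 'v) \<Rightarrow> 'e set \<Rightarrow> 'v set" where
  "horb tgt sv \<rho> = vorb sv (tgt (SOME a. a \<in> \<rho>))"

text \<open>Elements of ZI are functions 'v set => int vanishing outside I.
  Euler form <x,y> = sum_i eps_i x_i y_i - sum_rho eps_rho x_{t rho} y_{h rho}.\<close>
definition euler :: "('e \<Rightarrow> 'v) \<Rightarrow> ('e \<Rightarrow> 'v) \<Rightarrow> ('v \<Rightarrow> 'v) \<Rightarrow> ('e \<Rightarrow> 'e)
    \<Rightarrow> ('v set \<Rightarrow> int) \<Rightarrow> ('v set \<Rightarrow> int) \<Rightarrow> int" where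
  "euler src tgt sv se x y =
     (\<Sum>i\<in>Iset sv. int (card i) * x i * y i) -
     (\<Sum>\<rho>\<in>Gam1 se. int (card \<rho>) * x (torb src sv \<rho>) * y (horb tgt sv \<rho>))"

definition symform :: "('e \<Rightarrow> 'v) \<Rightarrow> ('e \<Rightarrow> 'v) \<Rightarrow> ('v \<Rightarrow> 'v) \<Rightarrow> ('e \<Rightarrow> 'e)
    \<Rightarrow> ('v set \<Rightarrow> int) \<Rightarrow> ('v set \<Rightarrow> int) \<Rightarrow> int" where
  "symform src tgt sv se x y = euler src tgt sv se x y + euler src tgt sv se y x"

definition unitv :: "'v set \<Rightarrow> 'v set \<Rightarrow> int" where
  "unitv i = (\<lambda>j. if j = i then 1 else 0)"

definition gamma_connected :: "('e \<Rightarrow> 'v) \<Rightarrow> ('e \<Rightarrow> 'v) \<Rightarrow> ('v \<Rightarrow> 'v) \<Rightarrow> ('e \<Rightarrow> 'e)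
    \<Rightarrow> 'v set set \<Rightarrow> bool" where
  "gamma_connected src tgt sv se S \<longleftrightarrow> S \<noteq> {} \<and>
     (\<forall>i\<in>S. \<forall>j\<in>S. (i, j) \<in> ({(k, l). k \<in> S \<and> l \<in> S \<and>
        (\<exists>\<rho>\<in>Gam1 se. (torb src sv \<rho> = k \<and> horb tgt sv \<rho> = l) \<or>
                     (torb src sv \<rho> = l \<and> horb tgt sv \<rho> = k))})\<^sup>*)"

definition fundamental_set :: "('e \<Rightarrow> 'v) \<Rightarrow> ('e \<Rightarrow> 'v) \<Rightarrow> ('v \<Rightarrow> 'v) \<Rightarrow> ('e \<Rightarrow> 'e)
    \<Rightarrow> ('v set \<Rightarrow> int) set" where
  "fundamental_set src tgt sv se = {\<mu>.
     (\<forall>i. 0 \<le> \<mu> i) \<and> (\<forall>i. i \<notin> Iset sv \<longrightarrow> \<mu> i = 0) \<and>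
     gamma_connected src tgt sv se {i \<in> Iset sv. \<mu> i \<noteq> 0} \<and>
     (\<forall>i\<in>Iset sv. symform src tgt sv se \<mu> (unitv i) \<le> 0)}"

definition eidem :: "'v set \<Rightarrow> ('v,'e) qpath \<Rightarrow> 'k::field" where
  "eidem i = (\<lambda>p. if snd p = [] \<and> fst p \<in> i then 1 else 0)"

text \<open>dim M at i = dim over F_{q^eps_i} of e_i M, read off from |e_i M| = (q^eps_i)^d.\<close>
definition dimv :: "('v \<Rightarrow> 'v) \<Rightarrow> nat \<Rightarrow> (('v,'e) qpath \<Rightarrow> 'k::field, 'm) amod
    \<Rightarrow> 'v set \<Rightarrow> int" where
  "dimv sv q M = (\<lambda>i. if i \<in> Iset sv
      then int (THE d. card (msmult M (eidem i) ` mcar M) = q ^ (card i * d)) else 0)"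

section \<open>The Ringel--Hall algebra (coefficient functions on isoclasses)\<close>

text \<open>Every finite A-module is isomorphic to one whose carrier is a subset of nat;
  isoclasses are the classes of such modules under isomorphism.\<close>
definition AMods :: "('e \<Rightarrow> 'v) \<Rightarrow> ('e \<Rightarrow> 'v) \<Rightarrow> ('v \<Rightarrow> 'v) \<Rightarrow> ('e \<Rightarrow> 'e) \<Rightarrow> nat
    \<Rightarrow> (('v,'e) qpath \<Rightarrow> 'k::field, nat) amod set" where
  "AMods src tgt sv se q = {M. is_amod src tgt sv se q M}"

definition isorel :: "('e \<Rightarrow> 'v) \<Rightarrow> ('e \<Rightarrow> 'v) \<Rightarrow> ('v \<Rightarrow> 'v) \<Rightarrow> ('e \<Rightarrow> 'e) \<Rightarrow> nat
    \<Rightarrow> ((('v,'e) qpath \<Rightarrow> 'k::field, nat) amod \<times> (('v,'e) qpath \<Rightarrow> 'k, nat) amod) set" where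
  "isorel src tgt sv se q = {(M, N). M \<in> AMods src tgt sv se q \<and> N \<in> AMods src tgt sv se q \<and>
        amod_isom (Alg src tgt sv se q) M N}"

definition isoclasses :: "('e \<Rightarrow> 'v) \<Rightarrow> ('e \<Rightarrow> 'v) \<Rightarrow> ('v \<Rightarrow> 'v) \<Rightarrow> ('e \<Rightarrow> 'e) \<Rightarrow> nat
    \<Rightarrow> (('v,'e) qpath \<Rightarrow> 'k::field, nat) amod set set" where
  "isoclasses src tgt sv se q = AMods src tgt sv se q // isorel src tgt sv se q"

definition crep :: "'a set \<Rightarrow> 'a" where
  "crep C = (SOME M. M \<in> C)"

definition zmod :: "('r, nat) amod" where
  "zmod = \<lparr> mcar = {0}, madd = (\<lambda>_ _. 0), mzero = 0, msmult = (\<lambda>_ _. 0) \<rparr>"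

definition zclass :: "('e \<Rightarrow> 'v) \<Rightarrow> ('e \<Rightarrow> 'v) \<Rightarrow> ('v \<Rightarrow> 'v) \<Rightarrow> ('e \<Rightarrow> 'e) \<Rightarrow> nat
    \<Rightarrow> (('v,'e) qpath \<Rightarrow> 'k::field, nat) amod set" where
  "zclass src tgt sv se q = isorel src tgt sv se q `` {zmod}"

definition classes_dim :: "('e \<Rightarrow> 'v) \<Rightarrow> ('e \<Rightarrow> 'v) \<Rightarrow> ('v \<Rightarrow> 'v) \<Rightarrow> ('e \<Rightarrow> 'e) \<Rightarrow> nat
    \<Rightarrow> ('v set \<Rightarrow> int) \<Rightarrow> (('v,'e) qpath \<Rightarrow> 'k::field, nat) amod set set" where
  "classes_dim src tgt sv se q d = {C \<in> isoclasses src tgt sv se q. dimv sv q (crep C) = d}"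

text \<open>An element x = sum_[M] x([M]) [M] of H_v(Q,sigma) is a finitely supported
  coefficient function on isoclasses; H_d consists of those supported on classes_dim d.\<close>
definition hall_hom :: "('e \<Rightarrow> 'v) \<Rightarrow> ('e \<Rightarrow> 'v) \<Rightarrow> ('v \<Rightarrow> 'v) \<Rightarrow> ('e \<Rightarrow> 'e) \<Rightarrow> nat
    \<Rightarrow> ('v set \<Rightarrow> int) \<Rightarrow> ((('v,'e) qpath \<Rightarrow> 'k::field, nat) amod set \<Rightarrow> complex) set" where
  "hall_hom src tgt sv se q d =
     {x. finite {C. x C \<noteq> 0} \<and> (\<forall>C. x C \<noteq> 0 \<longrightarrow> C \<in> classes_dim src tgt sv se q d)}"

text \<open>Coefficient of [X] tensor [Y] in Delta(x), with v = sqrt q: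
  Delta([M]) = sum v^<dim X, dim Y> a_X a_Y / a_M F^M_{X,Y} [X] tensor [Y].\<close>
definition hall_coprod :: "('e \<Rightarrow> 'v) \<Rightarrow> ('e \<Rightarrow> 'v) \<Rightarrow> ('v \<Rightarrow> 'v) \<Rightarrow> ('e \<Rightarrow> 'e) \<Rightarrow> nat
    \<Rightarrow> ((('v,'e) qpath \<Rightarrow> 'k::field, nat) amod set \<Rightarrow> complex)
    \<Rightarrow> (('v,'e) qpath \<Rightarrow> 'k, nat) amod set \<Rightarrow> (('v,'e) qpath \<Rightarrow> 'k, nat) amod set \<Rightarrow> complex" where
  "hall_coprod src tgt sv se q x X Y =
     (let A = Alg src tgt sv se q in
      \<Sum>M \<in> {C \<in> isoclasses src tgt sv se q. x C \<noteq> 0}.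
        x M * complex_of_real (sqrt (real q)) powi
                 euler src tgt sv se (dimv sv q (crep X)) (dimv sv q (crep Y))
            * of_nat (aut_num A (crep X)) * of_nat (aut_num A (crep Y)) / of_nat (aut_num A (crep M))
            * of_nat (hall_num A (crep M) (crep X) (crep Y)))"

text \<open>Primitive elements of degree d: Delta(x) = x tensor 1 + 1 tensor x.\<close>
definition hall_prim :: "('e \<Rightarrow> 'v) \<Rightarrow> ('e \<Rightarrow> 'v) \<Rightarrow> ('v \<Rightarrow> 'v) \<Rightarrow> ('e \<Rightarrow> 'e) \<Rightarrow> nat
    \<Rightarrow> ('v set \<Rightarrow> int) \<Rightarrow> ((('v,'e) qpath \<Rightarrow> 'k::field, nat) amod set \<Rightarrow> complex) set" where
  "hall_prim src tgt sv se q d = {x \<in> hall_hom src tgt sv se q d.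
     \<forall>X\<in>isoclasses src tgt sv se q. \<forall>Y\<in>isoclasses src tgt sv se q.
       hall_coprod src tgt sv se q x X Y =
         (if Y = zclass src tgt sv se q then x X else 0) +
         (if X = zclass src tgt sv se q then x Y else 0)}"

text \<open>I_d(x) = {x, 1_d} = sum over [M] of dimension d of x([M]) / a_M.\<close>
definition hall_I :: "('e \<Rightarrow> 'v) \<Rightarrow> ('e \<Rightarrow> 'v) \<Rightarrow> ('v \<Rightarrow> 'v) \<Rightarrow> ('e \<Rightarrow> 'e) \<Rightarrow> nat
    \<Rightarrow> ('v set \<Rightarrow> int) \<Rightarrow> ((('v,'e) qpath \<Rightarrow> 'k::field, nat) amod set \<Rightarrow> complex) \<Rightarrow> complex" where
  "hall_I src tgt sv se q d x =
     (\<Sum>C \<in> classes_dim src tgt sv se q d.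
        x C / of_nat (aut_num (Alg src tgt sv se q) (crep C)))"

end

theory Submission
  imports Defs
begin

text \<open>
  Let \<open>\<alpha>\<close> lie in the fundamental set. Its support contains at least two orbits, since for a
  single orbit \<open>i\<close> one would get \<open>(\<alpha>, i) = 2 \<epsilon>\<^sub>i \<alpha>\<^sub>i\<^sup>2 > 0\<close>. For a module \<open>M\<close> of
  dimension \<open>\<alpha>\<close>, acyclicity provides an orbit \<open>i\<close> of its support that is a sink within the
  support. Then \<open>e\<^sub>i M\<close> is a submodule with quotient \<open>e\<^sub>-\<^sub>i M\<close>, both nonzero, and it is the
  only submodule \<open>S\<close> with \<open>S \<cong> e\<^sub>i M\<close> and \<open>M/S \<cong> e\<^sub>-\<^sub>i M\<close>: the support, hence the sink, is
  determined by which idempotents kill \<open>S\<close> and \<open>M/S\<close>. Consequently, for the pair \<open>(X, Y)\<close> of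
  isoclasses obtained in this way from a module \<open>M'\<close>, \<open>F\<^sup>M\<^sub>X\<^sub>,\<^sub>Y\<close> is \<open>1\<close> if \<open>M\<close> yields the same
  pair and \<open>0\<close> otherwise. For primitive \<open>x\<close> the coefficient of \<open>[X] \<otimes> [Y]\<close> in \<open>\<Delta>(x)\<close>
  vanishes when \<open>X, Y \<noteq> 0\<close>, that is \<open>\<Sum>\<^sub>M x\<^sub>M F\<^sup>M\<^sub>X\<^sub>,\<^sub>Y / a\<^sub>M = 0\<close>; summing over all pairs that
  occur yields \<open>\<Sum>\<^sub>M x\<^sub>M / a\<^sub>M = I\<^sub>\<alpha>(x) = 0\<close>.
\<close>

lemma pvalid_append:
  "pvalid src tgt v (xs @ ys) \<longleftrightarrow> pvalid src tgt v xs \<and> pvalid src tgt (pend tgt v xs) ys"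
  by (induction xs arbitrary: v) auto

lemma pend_append: "pend tgt v (xs @ ys) = pend tgt (pend tgt v xs) ys"
  by (induction xs arbitrary: v) auto

lemma trivial_path_in_Paths: "(v, []) \<in> Paths src tgt"
  unfolding Paths_def by simp

definition sigma_stable :: "('v \<Rightarrow> 'v) \<Rightarrow> 'v set \<Rightarrow> bool" where
  "sigma_stable sv S \<longleftrightarrow> (\<forall>v. sv v \<in> S \<longleftrightarrow> v \<in> S)"

lemma sigma_stable_Compl: "sigma_stable sv S \<Longrightarrow> sigma_stable sv (- S)"
  and sigma_stable_Union: "(\<And>i. i \<in> J \<Longrightarrow> sigma_stable sv i) \<Longrightarrow> sigma_stable sv (\<Union>J)"
  and sigma_stable_empty: "sigma_stable sv {}"
  unfolding sigma_stable_def by auto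

lemma finite_path_factorisations:
  "finite {(r, s). r \<in> Paths src tgt \<and> s \<in> Paths src tgt \<and>
        pend tgt (fst s) (snd s) = fst r \<and> (fst s, snd s @ snd r) = p}"
proof (rule finite_subset)
  show "{(r, s). r \<in> Paths src tgt \<and> s \<in> Paths src tgt \<and>
        pend tgt (fst s) (snd s) = fst r \<and> (fst s, snd s @ snd r) = p} \<subseteq>
    (\<lambda>k. ((pend tgt (fst p) (take k (snd p)), drop k (snd p)), (fst p, take k (snd p)))) `
      {..length (snd p)}"
  proof
    fix w assume w: "w \<in> {(r, s). r \<in> Paths src tgt \<and> s \<in> Paths src tgt \<and>
        pend tgt (fst s) (snd s) = fst r \<and> (fst s, snd s @ snd r) = p}"
    obtain a b c d where abcd: "w = ((a, b), (c, d))" by (metis prod.exhaust)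
    have "p = (c, d @ b)" "a = pend tgt c d" using w abcd by auto
    then show "w \<in> (\<lambda>k. ((pend tgt (fst p) (take k (snd p)), drop k (snd p)),
        (fst p, take k (snd p)))) ` {..length (snd p)}"
      unfolding abcd by (intro image_eqI[of _ _ "length d"]) auto
  qed
qed simp

lemma sum_eq_single:
  assumes "finite S" "z \<in> S" "\<And>w. w \<in> S \<Longrightarrow> w \<noteq> z \<Longrightarrow> f w = 0"
  shows "sum f S = f z"
  using assms by (simp add: sum.remove sum.neutral)

lemma pa_mult_eidem_right:
  fixes x :: "('v,'e) qpath \<Rightarrow> 'k::field"
  assumes "\<forall>p. p \<notin> Paths src tgt \<longrightarrow> x p = 0"
  shows "pa_mult src tgt x (eidem T) = (\<lambda>p. if fst p \<in> T then x p else 0)"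
proof
  fix p :: "('v, 'e) qpath"
  let ?S = "{(r, s). r \<in> Paths src tgt \<and> s \<in> Paths src tgt \<and>
        pend tgt (fst s) (snd s) = fst r \<and> (fst s, snd s @ snd r) = p}"
  let ?f = "\<lambda>(r, s). x r * (eidem T s :: 'k)"
  show "pa_mult src tgt x (eidem T) p = (if fst p \<in> T then x p else 0)"
  proof (cases "p \<in> Paths src tgt")
    case True
    have mem: "(p, (fst p, [])) \<in> ?S" using True trivial_path_in_Paths by (cases p) auto
    have zero: "?f w = 0" if "w \<in> ?S" "w \<noteq> (p, (fst p, []))" for w
      using that by (cases p; auto simp: eidem_def split: if_splits)
    from sum_eq_single[OF finite_path_factorisations mem zero] show ?thesis
      unfolding pa_mult_def by (auto simp: eidem_def)
  next
    case False
    then have "\<forall>w\<in>?S. ?f w = 0" by (cases p) (auto simp: eidem_def split: if_splits)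
    then have "sum ?f ?S = 0" by (rule sum.neutral)
    then show ?thesis unfolding pa_mult_def using False assms[rule_format, of p] by auto
  qed
qed

lemma pa_mult_eidem_left:
  fixes y :: "('v,'e) qpath \<Rightarrow> 'k::field"
  assumes "\<forall>p. p \<notin> Paths src tgt \<longrightarrow> y p = 0"
  shows "pa_mult src tgt (eidem S) y = (\<lambda>p. if pend tgt (fst p) (snd p) \<in> S then y p else 0)"
proof
  fix p :: "('v, 'e) qpath"
  let ?S = "{(r, s). r \<in> Paths src tgt \<and> s \<in> Paths src tgt \<and>
        pend tgt (fst s) (snd s) = fst r \<and> (fst s, snd s @ snd r) = p}"
  let ?f = "\<lambda>(r, s). (eidem S r :: 'k) * y s"
  show "pa_mult src tgt (eidem S) y p = (if pend tgt (fst p) (snd p) \<in> S then y p else 0)"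
  proof (cases "p \<in> Paths src tgt")
    case True
    have mem: "((pend tgt (fst p) (snd p), []), p) \<in> ?S"
      using True trivial_path_in_Paths by (cases p) auto
    have zero: "?f w = 0" if "w \<in> ?S" "w \<noteq> ((pend tgt (fst p) (snd p), []), p)" for w
      using that by (cases p; auto simp: eidem_def split: if_splits)
    from sum_eq_single[OF finite_path_factorisations mem zero] show ?thesis
      unfolding pa_mult_def by (auto simp: eidem_def)
  next
    case False
    then have "\<forall>w\<in>?S. ?f w = 0" by (cases p) (auto simp: eidem_def split: if_splits)
    then have "sum ?f ?S = 0" by (rule sum.neutral)
    then show ?thesis unfolding pa_mult_def using False assms[rule_format, of p] by auto
  qed
qed

lemma eidem_vanishes_off_Paths: "\<forall>p. p \<notin> Paths src tgt \<longrightarrow> (eidem S p :: 'k::field) = 0"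
  using trivial_path_in_Paths by (auto simp: eidem_def)

lemma pa_mult_eidem_eidem: "pa_mult src tgt (eidem S) (eidem T) = (eidem (S \<inter> T) :: _ \<Rightarrow> 'k::field)"
  unfolding pa_mult_eidem_left[OF eidem_vanishes_off_Paths] by (auto simp: eidem_def)

lemma pa_add_eidem_eidem:
  "S \<inter> T = {} \<Longrightarrow> pa_add (eidem S) (eidem T) = (eidem (S \<union> T) :: _ \<Rightarrow> 'k::field)"
  by (rule ext) (auto simp: pa_add_def eidem_def)

lemma pa_one_eq_eidem_UNIV: "pa_one = eidem UNIV"
  by (auto simp: pa_one_def eidem_def)

lemma Alg_vanishes_off_Paths: "x \<in> Alg src tgt sv se q \<Longrightarrow> \<forall>p. p \<notin> Paths src tgt \<longrightarrow> x p = 0"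
  unfolding Alg_def by auto

lemma eidem_in_Alg: "0 < q \<Longrightarrow> sigma_stable sv S \<Longrightarrow> eidem S \<in> Alg src tgt sv se q"
  using eidem_vanishes_off_Paths unfolding Alg_def
  by (auto simp: eidem_def psig_def sigma_stable_def trivial_path_in_Paths)

lemma pa_mult_eidem_right_in_Alg:
  assumes "x \<in> Alg src tgt sv se q" "sigma_stable sv T" "0 < q"
  shows "pa_mult src tgt x (eidem T) \<in> Alg src tgt sv se q"
  using assms unfolding pa_mult_eidem_right[OF Alg_vanishes_off_Paths[OF assms(1)]]
  by (auto simp: Alg_def psig_def sigma_stable_def)

definition annihilates :: "('r, 'm) amod \<Rightarrow> 'r \<Rightarrow> bool" where
  "annihilates M a \<longleftrightarrow> (\<forall>x\<in>mcar M. msmult M a x = mzero M)"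

lemma amod_iso_id: "amod_iso A M M (\<lambda>x. x)"
  unfolding amod_iso_def by (simp add: bij_betw_def)

lemma amod_iso_comp:
  assumes f: "amod_iso A M N f" and g: "amod_iso A N P g"
  shows "amod_iso A M P (g \<circ> f)"
proof -
  have bf: "bij_betw f (mcar M) (mcar N)" and bg: "bij_betw g (mcar N) (mcar P)"
    using f g unfolding amod_iso_def by auto
  then have "f x \<in> mcar N" if "x \<in> mcar M" for x
    using that bij_betwE by blast
  then show ?thesis
    using bij_betw_trans[OF bf bg] f g unfolding amod_iso_def by simp
qed

lemma amod_iso_inv:
  assumes f: "amod_iso A M N f"
    and add_closed: "\<And>x y. x \<in> mcar M \<Longrightarrow> y \<in> mcar M \<Longrightarrow> madd M x y \<in> mcar M"
    and smult_closed: "\<And>a x. a \<in> A \<Longrightarrow> x \<in> mcar M \<Longrightarrow> msmult M a x \<in> mcar M"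
  shows "amod_iso A N M (inv_into (mcar M) f)"
proof -
  let ?g = "inv_into (mcar M) f"
  have b: "bij_betw f (mcar M) (mcar N)" using f unfolding amod_iso_def by auto
  then have b': "bij_betw ?g (mcar N) (mcar M)" by (rule bij_betw_inv_into)
  have gf: "?g (f x) = x" if "x \<in> mcar M" for x
    using b that by (simp add: bij_betw_def)
  have fg: "f (?g y) = y" and g_mem: "?g y \<in> mcar M" if "y \<in> mcar N" for y
    using b b' that by (auto simp: bij_betw_def f_inv_into_f)
  show ?thesis unfolding amod_iso_def
  proof (intro conjI ballI b')
    fix x y assume "x \<in> mcar N" "y \<in> mcar N"
    then have "madd N x y = f (madd M (?g x) (?g y))"
      using f g_mem fg unfolding amod_iso_def by simp
    then show "?g (madd N x y) = madd M (?g x) (?g y)"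
      using gf add_closed g_mem \<open>x \<in> mcar N\<close> \<open>y \<in> mcar N\<close> by simp
  next
    fix a x assume "a \<in> A" "x \<in> mcar N"
    then have "msmult N a x = f (msmult M a (?g x))"
      using f g_mem fg unfolding amod_iso_def by simp
    then show "?g (msmult N a x) = msmult M a (?g x)"
      using gf smult_closed g_mem \<open>a \<in> A\<close> \<open>x \<in> mcar N\<close> by simp
  qed
qed

lemma amod_isom_trans: "amod_isom A M M' \<Longrightarrow> amod_isom A M' M'' \<Longrightarrow> amod_isom A M M''"
  unfolding amod_isom_def using amod_iso_comp by blast

lemma amod_iso_card_eq: "amod_iso A M N f \<Longrightarrow> card (mcar M) = card (mcar N)"
  unfolding amod_iso_def using bij_betw_same_card by blast

lemma amod_iso_annihilates_iff:
  assumes f: "amod_iso A M M' f" and f_zero: "f (mzero M) = mzero M'"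
    and zero: "mzero M \<in> mcar M" and a: "a \<in> A"
    and closed: "\<And>x. x \<in> mcar M \<Longrightarrow> msmult M a x \<in> mcar M"
  shows "annihilates M a \<longleftrightarrow> annihilates M' a"
proof -
  have b: "bij_betw f (mcar M) (mcar M')"
    and hom: "\<And>x. x \<in> mcar M \<Longrightarrow> f (msmult M a x) = msmult M' a (f x)"
    using f a unfolding amod_iso_def by auto
  have "msmult M a x = mzero M \<longleftrightarrow> msmult M' a (f x) = mzero M'" if "x \<in> mcar M" for x
    using b closed[OF that] zero hom[OF that] f_zero unfolding bij_betw_def inj_on_def by metis
  moreover have "mcar M' = f ` mcar M" using b unfolding bij_betw_def by simp
  ultimately show ?thesis
    unfolding annihilates_def by auto
qed

section \<open>Orbits and sinks\<close>

locale acyclic_quiver_aut =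
  fixes src tgt :: "'e::finite \<Rightarrow> 'v::finite"
    and sv :: "'v \<Rightarrow> 'v" and se :: "'e \<Rightarrow> 'e"
    and q N :: nat
  assumes aut: "quiver_aut src tgt sv se"
    and acyclic: "quiver_acyclic src tgt"
    and q_ge_2: "2 \<le> q"
    and N_pos: "0 < N"
    and sv_period: "\<And>v. (sv ^^ N) v = v"
begin

lemma src_se: "src (se a) = sv (src a)" and tgt_se: "tgt (se a) = sv (tgt a)"
  using aut unfolding quiver_aut_def by auto

lemma src_funpow_se: "src ((se ^^ n) a) = (sv ^^ n) (src a)"
  by (induction n) (auto simp: src_se)

lemma tgt_funpow_se: "tgt ((se ^^ n) a) = (sv ^^ n) (tgt a)"
  by (induction n) (auto simp: tgt_se)

lemma pend_map_funpow: "pend tgt ((sv ^^ n) v) (map (se ^^ n) as) = (sv ^^ n) (pend tgt v as)"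
  by (induction as arbitrary: v) (auto simp: tgt_funpow_se)

lemma pvalid_map_funpow:
  "pvalid src tgt v as \<Longrightarrow> pvalid src tgt ((sv ^^ n) v) (map (se ^^ n) as)"
  by (induction as arbitrary: v) (auto simp: tgt_funpow_se src_funpow_se)

lemma pend_map_se: "pend tgt (sv v) (map se as) = sv (pend tgt v as)"
  using pend_map_funpow[of 1] by simp

lemma pa_mult_eidem_left_in_Alg:
  assumes "x \<in> Alg src tgt sv se q" "sigma_stable sv T"
  shows "pa_mult src tgt (eidem T) x \<in> Alg src tgt sv se q"
  using assms q_ge_2 unfolding pa_mult_eidem_left[OF Alg_vanishes_off_Paths[OF assms(1)]]
  by (auto simp: Alg_def psig_def sigma_stable_def pend_map_se)

lemma sv_funpow_period_mult: "(sv ^^ (N * k)) v = v"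
proof -
  have "sv ^^ N = id" using sv_period by auto
  then have "(sv ^^ N) ^^ k = id" by (induction k) auto
  then show ?thesis by (simp add: funpow_mult)
qed

lemma vorb_funpow: "vorb sv ((sv ^^ n) v) = vorb sv v"
proof
  show "vorb sv ((sv ^^ n) v) \<subseteq> vorb sv v"
    by (auto simp: vorb_def simp flip: funpow_add) (metis comp_apply funpow_add)
  show "vorb sv v \<subseteq> vorb sv ((sv ^^ n) v)"
  proof
    fix w assume "w \<in> vorb sv v"
    then obtain m where w: "w = (sv ^^ m) v" by (auto simp: vorb_def)
    have "N * n \<ge> n" using N_pos by simp
    then have "m + N * n = (m + N * n - n) + n" by linarith
    then have "(sv ^^ (m + N * n - n)) ((sv ^^ n) v) = (sv ^^ m) ((sv ^^ (N * n)) v)"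
      by (metis comp_apply funpow_add)
    then have "w = (sv ^^ (m + N * n - n)) ((sv ^^ n) v)"
      using w sv_funpow_period_mult by simp
    then show "w \<in> vorb sv ((sv ^^ n) v)"
      unfolding vorb_def by blast
  qed
qed

lemma vorb_self: "v \<in> vorb sv v"
  unfolding vorb_def by (auto intro: exI[of _ 0])

lemma vorb_eq_if_mem: "u \<in> vorb sv v \<Longrightarrow> vorb sv u = vorb sv v"
  unfolding vorb_def using vorb_funpow unfolding vorb_def by blast

lemma vorb_sv: "vorb sv (sv v) = vorb sv v"
  using vorb_funpow[of 1] by simp

lemma sigma_stable_vorb_notin: "sigma_stable sv {w. vorb sv w \<notin> Z}"
  unfolding sigma_stable_def by (auto simp: vorb_sv)

lemma vorb_in_Iset: "vorb sv v \<in> Iset sv"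
  unfolding Iset_def by auto

lemma Iset_disjoint: "i \<in> Iset sv \<Longrightarrow> j \<in> Iset sv \<Longrightarrow> i \<noteq> j \<Longrightarrow> i \<inter> j = {}"
  unfolding Iset_def using vorb_eq_if_mem by blast

lemma Iset_sigma_stable: "i \<in> Iset sv \<Longrightarrow> sigma_stable sv i"
  unfolding Iset_def sigma_stable_def using vorb_eq_if_mem vorb_sv vorb_self by (metis image_iff)

lemma card_Iset_pos: "i \<in> Iset sv \<Longrightarrow> 0 < card i"
  unfolding Iset_def using vorb_self by (auto simp: card_gt_0_iff)

lemma pvalid_length_less_card:
  assumes "pvalid src tgt v as"
  shows "length as < card (UNIV :: 'v set)"
proof (rule ccontr)
  assume long: "\<not> length as < card (UNIV :: 'v set)"
  define f where "f k = pend tgt v (take k as)" for k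
  have "\<not> inj_on f {0..length as}"
  proof
    assume "inj_on f {0..length as}"
    then have "card (f ` {0..length as}) = Suc (length as)" by (simp add: card_image)
    moreover have "card (f ` {0..length as}) \<le> card (UNIV :: 'v set)" by (rule card_mono) auto
    ultimately show False using long by simp
  qed
  then obtain k k' where kk: "k < k'" "k' \<le> length as" "f k = f k'"
    unfolding inj_on_def by (metis atLeastAtMost_iff linorder_neqE_nat)
  define cyc where "cyc = drop k (take k' as)"
  have split: "take k' as = take k as @ cyc"
    unfolding cyc_def using kk by (metis append_take_drop_id min.absorb1 less_imp_le take_take)
  have "pvalid src tgt v (take k' as)"
    using assms by (metis append_take_drop_id pvalid_append)
  then have "pvalid src tgt (f k) cyc" and "pend tgt (f k) cyc = f k"
    unfolding f_def using kk(3) split by (metis f_def pvalid_append pend_append)+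
  moreover have "cyc \<noteq> []" using kk unfolding cyc_def by simp
  ultimately show False using acyclic unfolding quiver_acyclic_def by metis
qed

definition is_sink_orbit :: "'v set set \<Rightarrow> 'v set \<Rightarrow> bool" where
  "is_sink_orbit Z i \<longleftrightarrow> i \<in> Z \<and>
     (\<forall>v\<in>i. \<forall>as. pvalid src tgt v as \<and> as \<noteq> [] \<longrightarrow> vorb sv (pend tgt v as) \<notin> Z)"

text \<open>The orbit reached by a longest path between orbits of \<open>Z\<close> is a sink: a nonempty
  path leaving it and ending in \<open>Z\<close> could be appended to a translate of that path.\<close>
lemma sink_orbit_exists:
  assumes "Z \<noteq> {}" "Z \<subseteq> Iset sv"
  shows "\<exists>i. is_sink_orbit Z i"
proof -
  define L where "L = {length as | v as.
    pvalid src tgt v as \<and> vorb sv v \<in> Z \<and> vorb sv (pend tgt v as) \<in> Z}"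
  obtain v0 where "vorb sv v0 \<in> Z" using assms unfolding Iset_def by auto
  then have "0 \<in> L" unfolding L_def by (auto intro!: exI[of _ "[]"] exI[of _ v0])
  have finL: "finite L"
    by (rule finite_subset[of _ "{..<card (UNIV :: 'v set)}"])
      (auto simp: L_def dest: pvalid_length_less_card)
  have "Max L \<in> L" using finL \<open>0 \<in> L\<close> by (intro Max_in) auto
  then obtain v as where vas: "length as = Max L" "pvalid src tgt v as"
      "vorb sv v \<in> Z" "vorb sv (pend tgt v as) \<in> Z"
    unfolding L_def by auto
  have "vorb sv (pend tgt w bs) \<notin> Z"
    if w: "w \<in> vorb sv (pend tgt v as)" and bs: "pvalid src tgt w bs" "bs \<noteq> []" for w bs
  proof
    assume Z: "vorb sv (pend tgt w bs) \<in> Z"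
    obtain n where wn: "w = (sv ^^ n) (pend tgt v as)" using w unfolding vorb_def by auto
    define cs where "cs = map (se ^^ n) as @ bs"
    have "pvalid src tgt ((sv ^^ n) v) cs"
      unfolding cs_def pvalid_append
      using pvalid_map_funpow[OF vas(2)] pend_map_funpow bs wn by auto
    moreover have "pend tgt ((sv ^^ n) v) cs = pend tgt w bs"
      unfolding cs_def pend_append pend_map_funpow wn by simp
    moreover have "vorb sv ((sv ^^ n) v) \<in> Z" using vorb_funpow vas by simp
    ultimately have "length cs \<in> L"
      unfolding L_def using Z by (metis (mono_tags, lifting) mem_Collect_eq)
    then have "length cs \<le> Max L" using finL by simp
    moreover have "length cs > Max L" using bs vas unfolding cs_def by (cases bs) auto
    ultimately show False by simp
  qed
  then show ?thesis
    unfolding is_sink_orbit_def using vas(4) vorb_eq_if_mem by blast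
qed

definition sink_orbit :: "'v set set \<Rightarrow> 'v set" where
  "sink_orbit Z = (SOME i. is_sink_orbit Z i)"

lemma is_sink_orbit_sink_orbit:
  "Z \<noteq> {} \<Longrightarrow> Z \<subseteq> Iset sv \<Longrightarrow> is_sink_orbit Z (sink_orbit Z)"
  unfolding sink_orbit_def using sink_orbit_exists by (rule someI_ex)

text \<open>Otherwise the orbit of an arrow, traversed \<open>N\<close> times, would form a cycle.\<close>
lemma vorb_src_ne_vorb_tgt: "vorb sv (src a) \<noteq> vorb sv (tgt a)"
proof
  assume "vorb sv (src a) = vorb sv (tgt a)"
  then have "tgt a \<in> vorb sv (src a)" using vorb_self by simp
  then obtain n where n: "tgt a = (sv ^^ n) (src a)" unfolding vorb_def by auto
  define g where "g k = (se ^^ (k * n)) a" for k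
  have walk: "pvalid src tgt ((sv ^^ (k * n)) (src a)) (map g [k..<k+m]) \<and>
     pend tgt ((sv ^^ (k * n)) (src a)) (map g [k..<k+m]) = (sv ^^ ((k + m) * n)) (src a)" for k m
  proof (induction m arbitrary: k)
    case (Suc m)
    have "[k..<k + Suc m] = k # [Suc k..<Suc k + m]" by (simp add: upt_conv_Cons)
    moreover have "tgt (g k) = (sv ^^ (Suc k * n)) (src a)"
      unfolding g_def tgt_funpow_se n
      by (simp add: funpow_add[symmetric, THEN fun_cong, simplified comp_def] add.commute)
    ultimately show ?case using Suc[of "Suc k"] by (simp add: g_def src_funpow_se)
  qed simp
  from walk[of 0 N]
  have "pvalid src tgt (src a) (map g [0..<N])" "pend tgt (src a) (map g [0..<N]) = src a"
    using sv_funpow_period_mult[of n "src a"] by (auto simp: mult.commute)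
  moreover have "map g [0..<N] \<noteq> []" using N_pos by simp
  ultimately show False using acyclic unfolding quiver_acyclic_def by blast
qed

lemma torb_ne_horb: "torb src sv \<rho> \<noteq> horb tgt sv \<rho>"
  unfolding torb_def horb_def by (rule vorb_src_ne_vorb_tgt)

end

definition msupport :: "('v \<Rightarrow> 'v) \<Rightarrow> (('v,'e) qpath \<Rightarrow> 'k::field, 'm) amod \<Rightarrow> 'v set set" where
  "msupport sv M = {j \<in> Iset sv. \<not> annihilates M (eidem j)}"

definition corner_mod :: "('r, 'm) amod \<Rightarrow> 'r \<Rightarrow> ('r, 'm) amod" where
  "corner_mod M f = \<lparr> mcar = msmult M f ` mcar M, madd = madd M, mzero = mzero M,
      msmult = (\<lambda>a x. msmult M f (msmult M a x)) \<rparr>"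

locale amodule = acyclic_quiver_aut src tgt sv se q N
  for src tgt :: "'e::finite \<Rightarrow> 'v::finite" and sv se q N +
  fixes M :: "(('v,'e) qpath \<Rightarrow> 'k::field, 'm) amod"
  assumes is_amod: "is_amod src tgt sv se q M"
begin

abbreviation "AA \<equiv> Alg src tgt sv se q"
abbreviation "car \<equiv> mcar M"
abbreviation "ad \<equiv> madd M"
abbreviation "z \<equiv> mzero M"
abbreviation "sm \<equiv> msmult M"
abbreviation "E S \<equiv> (eidem S :: ('v,'e) qpath \<Rightarrow> 'k)"

lemma finite_car: "finite car"
  using is_amod unfolding is_amod_def Let_def by blast

lemma zero_closed [simp]: "z \<in> car"
  using is_amod unfolding is_amod_def Let_def by blast

lemma add_closed [simp]: "x \<in> car \<Longrightarrow> y \<in> car \<Longrightarrow> ad x y \<in> car"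
  using is_amod unfolding is_amod_def Let_def by simp

lemma add_assoc: "x \<in> car \<Longrightarrow> y \<in> car \<Longrightarrow> w \<in> car \<Longrightarrow> ad (ad x y) w = ad x (ad y w)"
  using is_amod unfolding is_amod_def Let_def by blast

lemma add_commute: "x \<in> car \<Longrightarrow> y \<in> car \<Longrightarrow> ad x y = ad y x"
  using is_amod unfolding is_amod_def Let_def by blast

lemma zero_add [simp]: "x \<in> car \<Longrightarrow> ad z x = x"
  using is_amod unfolding is_amod_def Let_def by blast

lemma add_inverse_exists: "x \<in> car \<Longrightarrow> \<exists>y\<in>car. ad x y = z"
  using is_amod unfolding is_amod_def Let_def by blast

lemma smult_closed [simp]: "a \<in> AA \<Longrightarrow> x \<in> car \<Longrightarrow> sm a x \<in> car"
  using is_amod unfolding is_amod_def Let_def by blast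

lemma smult_add: "a \<in> AA \<Longrightarrow> x \<in> car \<Longrightarrow> y \<in> car \<Longrightarrow> sm a (ad x y) = ad (sm a x) (sm a y)"
  using is_amod unfolding is_amod_def Let_def by blast

lemma smult_pa_add: "a \<in> AA \<Longrightarrow> b \<in> AA \<Longrightarrow> x \<in> car \<Longrightarrow> sm (pa_add a b) x = ad (sm a x) (sm b x)"
  using is_amod unfolding is_amod_def Let_def by blast

lemma smult_pa_mult: "a \<in> AA \<Longrightarrow> b \<in> AA \<Longrightarrow> x \<in> car \<Longrightarrow> sm (pa_mult src tgt a b) x = sm a (sm b x)"
  using is_amod unfolding is_amod_def Let_def by blast

lemma smult_pa_one: "x \<in> car \<Longrightarrow> sm pa_one x = x"
  using is_amod unfolding is_amod_def Let_def by blast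

lemma add_zero [simp]: "x \<in> car \<Longrightarrow> ad x z = x"
  using add_commute[of x z] by simp

lemma add_left_cancel:
  assumes "x \<in> car" "y \<in> car" "w \<in> car" "ad x y = ad x w"
  shows "y = w"
proof -
  obtain n where n: "n \<in> car" "ad x n = z" using add_inverse_exists assms by blast
  then have "ad n x = z" using assms add_commute by simp
  moreover have "ad (ad n x) y = ad (ad n x) w" using assms n add_assoc by simp
  ultimately show ?thesis using assms by simp
qed

lemma zero_unique: "x \<in> car \<Longrightarrow> ad x x = x \<Longrightarrow> x = z"
  using add_left_cancel[of x x z] by simp

lemma smult_zero [simp]: "a \<in> AA \<Longrightarrow> sm a z = z"
  using zero_unique[of "sm a z"] smult_add[of a z z] by simp

lemma add_add_swap:
  assumes "x \<in> car" "y \<in> car" "s \<in> car" "t \<in> car"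
  shows "ad (ad x s) (ad y t) = ad (ad x y) (ad s t)"
proof -
  have "ad (ad x s) (ad y t) = ad x (ad (ad s y) t)" using assms by (simp add: add_assoc)
  also have "\<dots> = ad x (ad (ad y s) t)" using assms by (simp add: add_commute)
  also have "\<dots> = ad (ad x y) (ad s t)" using assms by (simp add: add_assoc)
  finally show ?thesis .
qed

lemma eidem_in_AA: "sigma_stable sv S \<Longrightarrow> E S \<in> AA"
  using q_ge_2 by (simp add: eidem_in_Alg)

lemma smult_eidem_closed [simp]: "sigma_stable sv S \<Longrightarrow> x \<in> car \<Longrightarrow> sm (E S) x \<in> car"
  using eidem_in_AA by simp

lemma smult_eidem_eidem:
  "sigma_stable sv S \<Longrightarrow> sigma_stable sv T \<Longrightarrow> x \<in> car \<Longrightarrow> sm (E S) (sm (E T) x) = sm (E (S \<inter> T)) x"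
  using smult_pa_mult[of "E S" "E T" x] eidem_in_AA pa_mult_eidem_eidem by metis

lemma smult_eidem_empty: "x \<in> car \<Longrightarrow> sm (E {}) x = z"
proof -
  assume x: "x \<in> car"
  have "pa_add (E {}) (E {}) = E {}" by (simp add: pa_add_eidem_eidem)
  then have "sm (E {}) x = ad (sm (E {}) x) (sm (E {}) x)"
    using smult_pa_add[of "E {}" "E {}" x] eidem_in_AA[OF sigma_stable_empty] x by simp
  then show ?thesis using zero_unique x eidem_in_AA[OF sigma_stable_empty] by simp
qed

lemma smult_eidem_disjoint:
  "sigma_stable sv S \<Longrightarrow> sigma_stable sv T \<Longrightarrow> S \<inter> T = {} \<Longrightarrow> x \<in> car \<Longrightarrow> sm (E S) (sm (E T) x) = z"
  using smult_eidem_eidem smult_eidem_empty by simp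

lemma eidem_decompose:
  assumes "sigma_stable sv S" "x \<in> car"
  shows "x = ad (sm (E S) x) (sm (E (- S)) x)"
proof -
  have "pa_add (E S) (E (- S)) = pa_one"
    by (simp add: pa_add_eidem_eidem pa_one_eq_eidem_UNIV)
  then show ?thesis
    using smult_pa_add[of "E S" "E (- S)" x] eidem_in_AA sigma_stable_Compl smult_pa_one assms
    by metis
qed

lemma annihilates_eidem_Union:
  assumes "finite J" "J \<subseteq> Iset sv" "\<forall>j\<in>J. annihilates M (E j)"
  shows "annihilates M (E (\<Union>J))"
  using assms
proof (induction J rule: finite_induct)
  case empty
  then show ?case using smult_eidem_empty by (simp add: annihilates_def)
next
  case (insert j J)
  have "j \<inter> \<Union>J = {}" using Iset_disjoint insert by blast
  then have "E (\<Union>(insert j J)) = pa_add (E j) (E (\<Union>J))" by (simp add: pa_add_eidem_eidem)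
  moreover have "sigma_stable sv j" "sigma_stable sv (\<Union>J)"
    using insert Iset_sigma_stable by (auto intro!: sigma_stable_Union)
  ultimately show ?case
    using insert smult_pa_add eidem_in_AA by (simp add: annihilates_def)
qed

abbreviation "supp \<equiv> msupport sv M"

lemma msupport_subset_Iset: "supp \<subseteq> Iset sv"
  unfolding msupport_def by auto

lemma annihilates_outside_msupport: "annihilates M (E {w. vorb sv w \<notin> supp})"
proof -
  have "{w. vorb sv w \<notin> supp} = \<Union>(Iset sv - supp)"
  proof
    show "{w. vorb sv w \<notin> supp} \<subseteq> \<Union>(Iset sv - supp)"
      using vorb_self vorb_in_Iset by blast
    show "\<Union>(Iset sv - supp) \<subseteq> {w. vorb sv w \<notin> supp}"
      unfolding Iset_def using vorb_eq_if_mem by auto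
  qed
  then show ?thesis
    by (simp only:) (rule annihilates_eidem_Union, auto simp: msupport_def)
qed

lemma submodD:
  assumes "submod AA M S"
  shows "S \<subseteq> car" "z \<in> S" "\<And>x y. x \<in> S \<Longrightarrow> y \<in> S \<Longrightarrow> ad x y \<in> S"
    "\<And>x. x \<in> S \<Longrightarrow> \<exists>y\<in>S. ad x y = z" "\<And>a x. a \<in> AA \<Longrightarrow> x \<in> S \<Longrightarrow> sm a x \<in> S"
  using assms unfolding submod_def by auto

lemma submod_is_amod: "submod AA M S \<Longrightarrow> is_amod src tgt sv se q (M\<lparr>mcar := S\<rparr>)"
  using submodD[of S] finite_subset[OF _ finite_car] add_assoc add_commute
    smult_add smult_pa_add smult_pa_mult smult_pa_one
  unfolding is_amod_def Let_def by (simp add: subset_iff)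

lemma mcoset_self: "submod AA M S \<Longrightarrow> x \<in> car \<Longrightarrow> x \<in> mcoset M S x"
  unfolding mcoset_def using submodD by (metis add_zero image_eqI)

lemma mcoset_eqI:
  assumes S: "submod AA M S" and xy: "y \<in> car" "s \<in> S" and x: "x = ad y s"
  shows "mcoset M S x = mcoset M S y"
proof
  note S' = submodD[OF S]
  have s: "s \<in> car" using S' xy by auto
  show "mcoset M S x \<subseteq> mcoset M S y"
  proof
    fix c assume "c \<in> mcoset M S x"
    then obtain t where t: "t \<in> S" "c = ad x t" unfolding mcoset_def by auto
    then have "c = ad y (ad s t)" using x add_assoc xy s S' by auto
    moreover have "ad s t \<in> S" using S' xy t by simp
    ultimately show "c \<in> mcoset M S y" unfolding mcoset_def by blast
  qed
  show "mcoset M S y \<subseteq> mcoset M S x"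
  proof
    fix c assume "c \<in> mcoset M S y"
    then obtain t where t: "t \<in> S" "c = ad y t" unfolding mcoset_def by auto
    obtain n where n: "n \<in> S" "ad s n = z" using S' xy by blast
    have tn: "t \<in> car" "n \<in> car" using S' t n by auto
    have "ad x (ad n t) = ad y (ad (ad s n) t)"
      unfolding x using add_assoc xy s tn by simp
    then have "ad x (ad n t) = ad y t" using n tn by simp
    moreover have "ad n t \<in> S" using S' n t by simp
    ultimately show "c \<in> mcoset M S x" unfolding mcoset_def using t by (metis image_eqI)
  qed
qed

lemma mcoset_zero: "submod AA M S \<Longrightarrow> mcoset M S z = S"
  unfolding mcoset_def using submodD by (auto simp: subset_iff)

lemma mcoset_eq_submod_iff:
  assumes S: "submod AA M S" and x: "x \<in> car"
  shows "mcoset M S x = S \<longleftrightarrow> x \<in> S"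
proof
  assume "x \<in> S"
  then show "mcoset M S x = S"
    using mcoset_eqI[OF S zero_closed, of x x] x mcoset_zero[OF S] by simp
qed (use mcoset_self[OF S x] in auto)

lemma some_mcoset_elem:
  assumes S: "submod AA M S" and x: "x \<in> car"
  obtains s where "s \<in> S" "s \<in> car" "(SOME c. c \<in> mcoset M S x) = ad x s"
proof -
  have "(SOME c. c \<in> mcoset M S x) \<in> mcoset M S x"
    using mcoset_self[OF S x] by (rule someI)
  then show ?thesis using that submodD(1)[OF S] unfolding mcoset_def by auto
qed

lemma quotmod_mcar: "mcar (quotmod M S) = mcoset M S ` car"
  unfolding quotmod_def by simp

lemma quotmod_mzero: "submod AA M S \<Longrightarrow> mzero (quotmod M S) = S"
  unfolding quotmod_def using mcoset_zero by simp

lemma quotmod_madd: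
  assumes S: "submod AA M S" and x: "x \<in> car" and y: "y \<in> car"
  shows "madd (quotmod M S) (mcoset M S x) (mcoset M S y) = mcoset M S (ad x y)"
proof -
  obtain s where s: "s \<in> S" "s \<in> car" "(SOME c. c \<in> mcoset M S x) = ad x s"
    using some_mcoset_elem[OF S x] .
  obtain t where t: "t \<in> S" "t \<in> car" "(SOME c. c \<in> mcoset M S y) = ad y t"
    using some_mcoset_elem[OF S y] .
  have "ad (ad x s) (ad y t) = ad (ad x y) (ad s t)" using add_add_swap x y s t by simp
  moreover have "ad s t \<in> S" using submodD(3)[OF S] s t by simp
  ultimately show ?thesis unfolding quotmod_def using s t x y
    by (simp add: mcoset_eqI[OF S])
qed

lemma quotmod_msmult:
  assumes S: "submod AA M S" and x: "x \<in> car" and a: "a \<in> AA"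
  shows "msmult (quotmod M S) a (mcoset M S x) = mcoset M S (sm a x)"
proof -
  obtain s where s: "s \<in> S" "s \<in> car" "(SOME c. c \<in> mcoset M S x) = ad x s"
    using some_mcoset_elem[OF S x] .
  have "sm a (ad x s) = ad (sm a x) (sm a s)" using smult_add a x s by simp
  moreover have "sm a s \<in> S" using submodD(5)[OF S] a s by simp
  ultimately show ?thesis unfolding quotmod_def using s x a
    by (simp add: mcoset_eqI[OF S])
qed

lemma quotmod_mzero_closed: "mzero (quotmod M S) \<in> mcar (quotmod M S)"
  unfolding quotmod_def by simp

lemma quotmod_add_mzero:
  "submod AA M S \<Longrightarrow>
    madd (quotmod M S) (mzero (quotmod M S)) (mzero (quotmod M S)) = mzero (quotmod M S)"
  using quotmod_madd[of S z z] by (simp add: quotmod_def)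

lemma quotmod_madd_closed:
  "submod AA M S \<Longrightarrow> C \<in> mcar (quotmod M S) \<Longrightarrow> D \<in> mcar (quotmod M S) \<Longrightarrow>
    madd (quotmod M S) C D \<in> mcar (quotmod M S)"
  unfolding quotmod_mcar using quotmod_madd by auto

lemma quotmod_msmult_closed:
  "submod AA M S \<Longrightarrow> a \<in> AA \<Longrightarrow> C \<in> mcar (quotmod M S) \<Longrightarrow>
    msmult (quotmod M S) a C \<in> mcar (quotmod M S)"
  unfolding quotmod_mcar using quotmod_msmult by auto

lemma annihilates_quotmod_iff:
  "submod AA M S \<Longrightarrow> a \<in> AA \<Longrightarrow> annihilates (quotmod M S) a \<longleftrightarrow> (\<forall>x\<in>car. sm a x \<in> S)"
  unfolding annihilates_def quotmod_mcar
  using quotmod_mzero quotmod_msmult mcoset_eq_submod_iff by auto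

lemma annihilates_eidem_iff_submod_quotmod:
  assumes S: "submod AA M S" and j: "sigma_stable sv j"
  shows "annihilates M (E j) \<longleftrightarrow>
    annihilates (M\<lparr>mcar := S\<rparr>) (E j) \<and> annihilates (quotmod M S) (E j)"
proof
  assume "annihilates M (E j)"
  then show "annihilates (M\<lparr>mcar := S\<rparr>) (E j) \<and> annihilates (quotmod M S) (E j)"
    using submodD[OF S] annihilates_quotmod_iff[OF S eidem_in_AA[OF j]]
    by (auto simp: annihilates_def)
next
  assume "annihilates (M\<lparr>mcar := S\<rparr>) (E j) \<and> annihilates (quotmod M S) (E j)"
  then have "\<forall>x\<in>S. sm (E j) x = z" "\<forall>x\<in>car. sm (E j) x \<in> S"
    using annihilates_quotmod_iff[OF S eidem_in_AA[OF j]] by (auto simp: annihilates_def)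
  then show "annihilates M (E j)"
    using smult_eidem_eidem[OF j j] by (auto simp: annihilates_def)
qed

end

context acyclic_quiver_aut
begin

lemma amoduleI: "is_amod src tgt sv se q M \<Longrightarrow> amodule src tgt sv se q N M"
  by (simp add: acyclic_quiver_aut_axioms amodule_def amodule_axioms_def)

lemma amod_iso_mzero:
  assumes f: "amod_iso A M M' f" and M': "is_amod src tgt sv se q M'"
    and zero: "mzero M \<in> mcar M" "madd M (mzero M) (mzero M) = mzero M"
  shows "f (mzero M) = mzero M'"
proof -
  interpret M': amodule src tgt sv se q N M' by (rule amoduleI[OF M'])
  have "f (mzero M) \<in> mcar M'" using f zero unfolding amod_iso_def bij_betw_def by auto
  moreover have "madd M' (f (mzero M)) (f (mzero M)) = f (mzero M)"
    using f zero unfolding amod_iso_def by metis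
  ultimately show ?thesis using M'.zero_unique by simp
qed

lemma aut_num_pos:
  assumes "is_amod src tgt sv se q M"
  shows "0 < aut_num (Alg src tgt sv se q) M"
proof -
  interpret M: amodule src tgt sv se q N M by (rule amoduleI[OF assms])
  let ?S = "{f \<in> mcar M \<rightarrow>\<^sub>E mcar M. amod_iso (Alg src tgt sv se q) M M f}"
  have "finite ?S"
    using M.finite_car by (intro finite_subset[OF _ finite_PiE[of "mcar M" "\<lambda>_. mcar M"]]) auto
  moreover have "(\<lambda>x\<in>mcar M. x) \<in> ?S"
    unfolding amod_iso_def by (auto simp: bij_betw_def inj_on_def)
  ultimately show ?thesis
    unfolding aut_num_def by (metis (no_types, lifting) card_gt_0_iff empty_iff)
qed

lemma amod_isom_sym:
  assumes "amod_isom (Alg src tgt sv se q) M M'" "is_amod src tgt sv se q M"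
  shows "amod_isom (Alg src tgt sv se q) M' M"
proof -
  interpret M: amodule src tgt sv se q N M by (rule amoduleI[OF assms(2)])
  show ?thesis using assms(1) amod_iso_inv[of _ M, OF _ M.add_closed M.smult_closed]
    unfolding amod_isom_def by blast
qed

lemma amod_isom_annihilates_iff:
  assumes "amod_isom (Alg src tgt sv se q) M M'"
    and "is_amod src tgt sv se q M" "is_amod src tgt sv se q M'"
    and "a \<in> Alg src tgt sv se q"
  shows "annihilates M a \<longleftrightarrow> annihilates M' a"
proof -
  interpret M: amodule src tgt sv se q N M by (rule amoduleI[OF assms(2)])
  obtain f where f: "amod_iso (Alg src tgt sv se q) M M' f"
    using assms(1) unfolding amod_isom_def by blast
  show ?thesis
    using amod_iso_annihilates_iff[OF f amod_iso_mzero[OF f assms(3)] M.zero_closed assms(4)]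
      assms(4)
    by simp
qed

lemma quotmod_isom_annihilates_iff:
  assumes "amod_isom (Alg src tgt sv se q) (quotmod M S) M'"
    and "is_amod src tgt sv se q M" "submod (Alg src tgt sv se q) M S"
    and "is_amod src tgt sv se q M'" "a \<in> Alg src tgt sv se q"
  shows "annihilates (quotmod M S) a \<longleftrightarrow> annihilates M' a"
proof -
  interpret M: amodule src tgt sv se q N M by (rule amoduleI[OF assms(2)])
  obtain f where f: "amod_iso (Alg src tgt sv se q) (quotmod M S) M' f"
    using assms(1) unfolding amod_isom_def by blast
  have "f (mzero (quotmod M S)) = mzero M'"
    using amod_iso_mzero[OF f assms(4) M.quotmod_mzero_closed M.quotmod_add_mzero[OF assms(3)]] .
  then show ?thesis
    using amod_iso_annihilates_iff[OF f _ M.quotmod_mzero_closed assms(5)]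
      M.quotmod_msmult_closed[OF assms(3) assms(5)] by simp
qed

end

section \<open>Splitting off a sink of the support\<close>

context amodule
begin

abbreviation "part i \<equiv> sm (E i) ` car"

lemma sink_sigma_stable: "is_sink_orbit supp i \<Longrightarrow> sigma_stable sv i"
  using msupport_subset_Iset Iset_sigma_stable unfolding is_sink_orbit_def by auto

text \<open>\<open>e_{-i} a e_i\<close> lives on nonempty paths leaving the sink \<open>i\<close>; these end
  outside the support, where the idempotent acts as zero.\<close>
lemma sink_corner_vanishes:
  assumes i: "is_sink_orbit supp i" and a: "a \<in> AA" and m: "m \<in> car"
  shows "sm (E (- i)) (sm a (sm (E i) m)) = z"
proof -
  have si: "sigma_stable sv i" and sci: "sigma_stable sv (- i)"
    using sink_sigma_stable[OF i] sigma_stable_Compl by auto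
  let ?U = "{w. vorb sv w \<notin> supp}"
  define c where "c = pa_mult src tgt (E (- i)) (pa_mult src tgt a (E i))"
  have ai: "pa_mult src tgt a (E i) \<in> AA"
    using pa_mult_eidem_right_in_Alg[OF a si] q_ge_2 by simp
  have cA: "c \<in> AA" unfolding c_def using pa_mult_eidem_left_in_Alg[OF ai sci] .
  have "sm (E (- i)) (sm a (sm (E i) m)) = sm c m"
    unfolding c_def using smult_pa_mult ai a eidem_in_AA si sci m by simp
  have cval:
    "c = (\<lambda>p. if pend tgt (fst p) (snd p) \<in> - i then (if fst p \<in> i then a p else 0) else 0)"
    unfolding c_def pa_mult_eidem_left[OF Alg_vanishes_off_Paths[OF ai]]
    unfolding pa_mult_eidem_right[OF Alg_vanishes_off_Paths[OF a]] by simp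
  have "c p = (if pend tgt (fst p) (snd p) \<in> ?U then c p else 0)" for p
  proof (cases "c p = 0")
    case False
    then have cp: "pend tgt (fst p) (snd p) \<notin> i" "fst p \<in> i" "a p \<noteq> 0"
      unfolding cval by (auto split: if_splits)
    then have "pvalid src tgt (fst p) (snd p)"
      using Alg_vanishes_off_Paths[OF a] unfolding Paths_def by (cases p) auto
    moreover have "snd p \<noteq> []" using cp by auto
    ultimately have "vorb sv (pend tgt (fst p) (snd p)) \<notin> supp"
      using i cp unfolding is_sink_orbit_def by blast
    then show ?thesis by simp
  qed simp
  then have "c = pa_mult src tgt (E ?U) c"
    unfolding pa_mult_eidem_left[OF Alg_vanishes_off_Paths[OF cA]] by (rule ext)
  then have "sm c m = sm (E ?U) (sm c m)"
    using smult_pa_mult[OF eidem_in_AA[OF sigma_stable_vorb_notin[of supp]] cA m] by metis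
  also have "\<dots> = z"
    using annihilates_outside_msupport cA m unfolding annihilates_def by simp
  finally show ?thesis using \<open>sm (E (- i)) (sm a (sm (E i) m)) = sm c m\<close> by simp
qed

lemma smult_compl_sink:
  assumes i: "is_sink_orbit supp i" and a: "a \<in> AA" and x: "x \<in> car"
  shows "sm (E (- i)) (sm a x) = sm (E (- i)) (sm a (sm (E (- i)) x))"
proof -
  have si: "sigma_stable sv i" and sci: "sigma_stable sv (- i)"
    using sink_sigma_stable[OF i] sigma_stable_Compl by auto
  have "sm (E (- i)) (sm a x) = sm (E (- i)) (sm a (ad (sm (E i) x) (sm (E (- i)) x)))"
    using eidem_decompose[OF si x] by simp
  also have "\<dots> = ad (sm (E (- i)) (sm a (sm (E i) x))) (sm (E (- i)) (sm a (sm (E (- i)) x)))"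
    using smult_add a x si sci eidem_in_AA by simp
  also have "\<dots> = sm (E (- i)) (sm a (sm (E (- i)) x))"
    using sink_corner_vanishes[OF i a x] a x sci by simp
  finally show ?thesis .
qed

lemma part_add_inverse:
  assumes "sigma_stable sv j" "x \<in> part j"
  shows "\<exists>y\<in>part j. ad x y = z"
proof -
  obtain m where m: "m \<in> car" "x = sm (E j) m" using assms by auto
  obtain n where n: "n \<in> car" "ad m n = z" using add_inverse_exists m by blast
  have "ad x (sm (E j) n) = z" using smult_add[of "E j" m n] eidem_in_AA assms m n by simp
  then show ?thesis using n by auto
qed

lemma part_add_closed:
  assumes "sigma_stable sv j" "x \<in> part j" "y \<in> part j"
  shows "ad x y \<in> part j"
proof -
  obtain m n where "m \<in> car" "n \<in> car" "x = sm (E j) m" "y = sm (E j) n"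
    using assms by auto
  then show ?thesis
    using smult_add eidem_in_AA assms by (auto intro!: image_eqI[of _ _ "ad m n"])
qed

lemma sink_part_submod:
  assumes i: "is_sink_orbit supp i"
  shows "submod AA M (part i)"
  unfolding submod_def
proof (intro conjI ballI)
  have si: "sigma_stable sv i" using sink_sigma_stable[OF i] .
  show "part i \<subseteq> car" using si by auto
  show "z \<in> part i" using smult_zero[OF eidem_in_AA[OF si]] zero_closed by (metis image_eqI)
  show "ad x y \<in> part i" if "x \<in> part i" "y \<in> part i" for x y
    using part_add_closed[OF si that] .
  show "\<exists>y\<in>part i. ad x y = z" if "x \<in> part i" for x
    using part_add_inverse[OF si that] .
  fix a :: "('v,'e) qpath \<Rightarrow> 'k" and x assume a: "a \<in> AA" and "x \<in> part i"
  then obtain m where m: "m \<in> car" "x = sm (E i) m" by auto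
  have ax: "sm a x \<in> car" using a m si by simp
  have "sm a x = ad (sm (E i) (sm a x)) (sm (E (- i)) (sm a x))"
    using eidem_decompose[OF si ax] .
  also have "\<dots> = sm (E i) (sm a x)"
    using sink_corner_vanishes[OF i a m(1)] m si ax by simp
  finally show "sm a x \<in> part i" using ax by (metis imageI)
qed

lemma corner_mod_compl_sink_is_amod:
  assumes i: "is_sink_orbit supp i"
  shows "is_amod src tgt sv se q (corner_mod M (E (- i)))"
proof -
  have sci: "sigma_stable sv (- i)"
    using sink_sigma_stable[OF i] sigma_stable_Compl by auto
  let ?f = "E (- i)" and ?C = "part (- i)"
  have fA: "?f \<in> AA" using eidem_in_AA[OF sci] .
  have cl: "x \<in> ?C \<Longrightarrow> x \<in> car" for x using sci by auto
  have "z \<in> ?C" using smult_zero[OF fA] zero_closed by (metis image_eqI)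
  moreover have "\<forall>a\<in>AA. \<forall>b\<in>AA. \<forall>x\<in>?C.
      sm ?f (sm (pa_mult src tgt a b) x) = sm ?f (sm a (sm ?f (sm b x)))"
    using smult_pa_mult smult_compl_sink[OF i] cl by simp
  moreover have "\<forall>x\<in>?C. sm ?f (sm pa_one x) = x"
    using smult_pa_one smult_eidem_eidem[OF sci sci] smult_eidem_closed[OF sci] by auto
  ultimately show ?thesis
    unfolding is_amod_def Let_def corner_mod_def amod.simps
    using finite_car part_add_closed[OF sci] part_add_inverse[OF sci] cl
      add_assoc add_commute smult_add smult_pa_add fA
    by auto
qed

lemma quotmod_sink_part_iso_corner:
  assumes i: "is_sink_orbit supp i"
  shows "amod_iso AA (quotmod M (part i)) (corner_mod M (E (- i)))
           (\<lambda>C. sm (E (- i)) (SOME c. c \<in> C))"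
proof -
  have si: "sigma_stable sv i" and sci: "sigma_stable sv (- i)"
    using sink_sigma_stable[OF i] sigma_stable_Compl by auto
  have S: "submod AA M (part i)" by (rule sink_part_submod[OF i])
  let ?f = "E (- i)" and ?cos = "mcoset M (part i)"
  let ?g = "\<lambda>C. sm ?f (SOME c. c \<in> C)"
  have fA: "?f \<in> AA" using eidem_in_AA[OF sci] .
  have g_mcoset: "?g (?cos x) = sm ?f x" if x: "x \<in> car" for x
  proof -
    obtain s where s: "s \<in> part i" "s \<in> car" "(SOME c. c \<in> ?cos x) = ad x s"
      using some_mcoset_elem[OF S x] .
    then have "sm ?f s = z" using smult_eidem_disjoint[OF sci si] by auto
    then show ?thesis using s smult_add[OF fA x] x sci by simp
  qed
  have mcoset_compl: "?cos x = ?cos (sm ?f x)" if x: "x \<in> car" for x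
  proof (rule mcoset_eqI[OF S])
    show "sm ?f x \<in> car" "sm (E i) x \<in> part i" using x sci by auto
    show "x = ad (sm ?f x) (sm (E i) x)" using eidem_decompose[OF si x] add_commute x si sci by simp
  qed
  show ?thesis unfolding amod_iso_def
  proof (intro conjI ballI)
    have "inj_on ?g (?cos ` car)"
      by (rule inj_onI) (use g_mcoset mcoset_compl in auto)
    moreover have "?g ` ?cos ` car = mcar (corner_mod M ?f)"
      unfolding corner_mod_def using g_mcoset by (auto simp: image_image)
    ultimately show "bij_betw ?g (mcar (quotmod M (part i))) (mcar (corner_mod M ?f))"
      unfolding bij_betw_def quotmod_mcar by simp
  next
    fix C D assume "C \<in> mcar (quotmod M (part i))" "D \<in> mcar (quotmod M (part i))"
    then obtain x y where "x \<in> car" "y \<in> car" "C = ?cos x" "D = ?cos y"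
      unfolding quotmod_mcar by auto
    then show "?g (madd (quotmod M (part i)) C D) = madd (corner_mod M ?f) (?g C) (?g D)"
      using quotmod_madd[OF S] g_mcoset smult_add[OF fA] by (simp add: corner_mod_def)
  next
    fix a :: "('v,'e) qpath \<Rightarrow> 'k" and C
    assume a: "a \<in> AA" and "C \<in> mcar (quotmod M (part i))"
    then obtain x where "x \<in> car" "C = ?cos x"
      unfolding quotmod_mcar by auto
    then show "?g (msmult (quotmod M (part i)) a C) = msmult (corner_mod M ?f) a (?g C)"
      using quotmod_msmult[OF S _ a] g_mcoset a smult_compl_sink[OF i a]
      by (simp add: corner_mod_def)
  qed
qed

lemma sink_part_annihilated:
  assumes "is_sink_orbit supp i"
  shows "annihilates (M\<lparr>mcar := part i\<rparr>) (E (- i))"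
proof -
  have si: "sigma_stable sv i" and sci: "sigma_stable sv (- i)"
    using sink_sigma_stable[OF assms] sigma_stable_Compl by auto
  then show ?thesis
    using smult_eidem_disjoint[OF sci si] by (auto simp: annihilates_def)
qed

lemma corner_annihilated:
  assumes "is_sink_orbit supp i"
  shows "annihilates (corner_mod M (E (- i))) (E i)"
proof -
  have si: "sigma_stable sv i" and sci: "sigma_stable sv (- i)"
    using sink_sigma_stable[OF assms] sigma_stable_Compl by auto
  show ?thesis
    unfolding corner_mod_def annihilates_def
    using smult_eidem_disjoint[OF si sci] smult_eidem_disjoint[OF sci si] eidem_in_AA[OF sci] si sci
    by auto
qed

lemma part_nontrivial: "i \<in> supp \<Longrightarrow> \<exists>s\<in>part i. s \<noteq> z"
  unfolding msupport_def annihilates_def by auto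

lemma corner_nontrivial:
  assumes i: "is_sink_orbit supp i" and j: "j \<in> supp" "j \<noteq> i"
  shows "\<exists>y\<in>mcar (corner_mod M (E (- i))). y \<noteq> mzero (corner_mod M (E (- i)))"
proof -
  have iI: "i \<in> Iset sv" and jI: "j \<in> Iset sv"
    using i j msupport_subset_Iset unfolding is_sink_orbit_def by auto
  have si: "sigma_stable sv i" and sj: "sigma_stable sv j" and sci: "sigma_stable sv (- i)"
    using Iset_sigma_stable[OF iI] Iset_sigma_stable[OF jI] sigma_stable_Compl by auto
  obtain x where x: "x \<in> car" "sm (E j) x \<noteq> z"
    using j unfolding msupport_def annihilates_def by auto
  have "- i \<inter> j = j" using Iset_disjoint[OF iI jI] j by auto
  then have "sm (E (- i)) (sm (E j) x) = sm (E j) x" using smult_eidem_eidem[OF sci sj x(1)] by simp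
  then show ?thesis
    unfolding corner_mod_def using x sj
    by (auto intro!: bexI[of _ "sm (E j) x"] image_eqI[of _ _ "sm (E j) x"])
qed

lemma submod_eq_part:
  assumes S: "submod AA M S" and i: "sigma_stable sv i"
    and sub: "annihilates (M\<lparr>mcar := S\<rparr>) (E (- i))" and quot: "annihilates (quotmod M S) (E i)"
  shows "S = part i"
proof
  have sci: "sigma_stable sv (- i)" using sigma_stable_Compl[OF i] .
  show "S \<subseteq> part i"
  proof
    fix s assume s: "s \<in> S"
    then have "s \<in> car" using submodD(1)[OF S] by auto
    then have "s = ad (sm (E i) s) (sm (E (- i)) s)" by (rule eidem_decompose[OF i])
    also have "\<dots> = sm (E i) s" using sub s \<open>s \<in> car\<close> i by (simp add: annihilates_def)
    finally show "s \<in> part i" using \<open>s \<in> car\<close> by (metis imageI)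
  qed
  show "part i \<subseteq> S"
    using quot annihilates_quotmod_iff[OF S eidem_in_AA[OF i]] by auto
qed

end

context acyclic_quiver_aut
begin

definition sink_sub :: "(('v,'e) qpath \<Rightarrow> 'k::field, 'm) amod \<Rightarrow> (('v,'e) qpath \<Rightarrow> 'k, 'm) amod" where
  "sink_sub M = M\<lparr>mcar := msmult M (eidem (sink_orbit (msupport sv M))) ` mcar M\<rparr>"

definition sink_quot :: "(('v,'e) qpath \<Rightarrow> 'k::field, 'm) amod \<Rightarrow> (('v,'e) qpath \<Rightarrow> 'k, 'm) amod" where
  "sink_quot M = corner_mod M (eidem (- sink_orbit (msupport sv M)))"

context
  fixes M :: "(('v,'e) qpath \<Rightarrow> 'k::field, 'm) amod"
  assumes M: "is_amod src tgt sv se q M" and supp: "msupport sv M \<noteq> {}"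
begin

interpretation M: amodule src tgt sv se q N M by (rule amoduleI[OF M])

lemma is_sink_orbit_msupport: "is_sink_orbit (msupport sv M) (sink_orbit (msupport sv M))"
  using is_sink_orbit_sink_orbit[OF supp M.msupport_subset_Iset] .

lemma submod_sink_sub: "submod (Alg src tgt sv se q) M (mcar (sink_sub M))"
  unfolding sink_sub_def using M.sink_part_submod[OF is_sink_orbit_msupport] by simp

lemma sink_sub_is_amod: "is_amod src tgt sv se q (sink_sub M)"
  using M.submod_is_amod[OF submod_sink_sub] by (simp add: sink_sub_def)

lemma sink_quot_is_amod: "is_amod src tgt sv se q (sink_quot M)"
  unfolding sink_quot_def by (rule M.corner_mod_compl_sink_is_amod[OF is_sink_orbit_msupport])

lemma sink_quot_isom_quotmod:
  "amod_isom (Alg src tgt sv se q) (sink_quot M) (quotmod M (mcar (sink_sub M)))"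
  using amod_iso_inv[OF M.quotmod_sink_part_iso_corner[OF is_sink_orbit_msupport]]
    M.quotmod_madd_closed M.quotmod_msmult_closed M.sink_part_submod[OF is_sink_orbit_msupport]
  unfolding amod_isom_def sink_quot_def sink_sub_def by auto

lemma quotmod_isom_sink_quot:
  "amod_isom (Alg src tgt sv se q) (quotmod M (mcar (sink_sub M))) (sink_quot M)"
  using M.quotmod_sink_part_iso_corner[OF is_sink_orbit_msupport]
  unfolding amod_isom_def sink_quot_def sink_sub_def by auto

end

lemma annihilates_eidem_iff_extension:
  assumes M: "is_amod src tgt sv se q M" and S: "submod (Alg src tgt sv se q) M S"
    and Y: "is_amod src tgt sv se q Y" "amod_isom (Alg src tgt sv se q) (M\<lparr>mcar := S\<rparr>) Y"
    and X: "is_amod src tgt sv se q X" "amod_isom (Alg src tgt sv se q) (quotmod M S) X"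
    and j: "j \<in> Iset sv"
  shows "annihilates M (eidem j) \<longleftrightarrow> annihilates Y (eidem j) \<and> annihilates X (eidem j)"
proof -
  interpret M: amodule src tgt sv se q N M by (rule amoduleI[OF M])
  have sj: "sigma_stable sv j" using Iset_sigma_stable[OF j] .
  show ?thesis
    using M.annihilates_eidem_iff_submod_quotmod[OF S sj]
      amod_isom_annihilates_iff[OF Y(2) M.submod_is_amod[OF S] Y(1) M.eidem_in_AA[OF sj]]
      quotmod_isom_annihilates_iff[OF X(2) M S X(1) M.eidem_in_AA[OF sj]]
    by simp
qed

text \<open>The support is read off from which idempotents kill the sub and the quotient module,
  so \<open>M\<close> and \<open>M'\<close> share their sink.\<close>
lemma sink_sub_unique:
  fixes M M' :: "(('v,'e) qpath \<Rightarrow> 'k::field, 'm) amod"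
  assumes M: "is_amod src tgt sv se q M" and M': "is_amod src tgt sv se q M'"
    and supp': "msupport sv M' \<noteq> {}"
    and S: "submod (Alg src tgt sv se q) M S"
    and Y: "amod_isom (Alg src tgt sv se q) (M\<lparr>mcar := S\<rparr>) (sink_sub M')"
    and X: "amod_isom (Alg src tgt sv se q) (quotmod M S) (sink_quot M')"
  shows "msupport sv M = msupport sv M'" "S = mcar (sink_sub M)"
proof -
  interpret M: amodule src tgt sv se q N M by (rule amoduleI[OF M])
  interpret M': amodule src tgt sv se q N M' by (rule amoduleI[OF M'])
  let ?i = "sink_orbit (msupport sv M')"
  have i: "is_sink_orbit (msupport sv M') ?i" using is_sink_orbit_msupport[OF M' supp'] .
  have si: "sigma_stable sv ?i" and sci: "sigma_stable sv (- ?i)"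
    using M'.sink_sigma_stable[OF i] sigma_stable_Compl by auto
  note Y' = sink_sub_is_amod[OF M' supp'] and X' = sink_quot_is_amod[OF M' supp']
  have "amod_isom (Alg src tgt sv se q) (M'\<lparr>mcar := mcar (sink_sub M')\<rparr>) (sink_sub M')"
    using amod_iso_id unfolding amod_isom_def by (fastforce simp: sink_sub_def)
  then have "annihilates M (eidem j) \<longleftrightarrow> annihilates M' (eidem j)" if j: "j \<in> Iset sv" for j
    using annihilates_eidem_iff_extension[OF M S Y' Y X' X j]
      annihilates_eidem_iff_extension[OF M' submod_sink_sub[OF M' supp'] Y' _ X'
        quotmod_isom_sink_quot[OF M' supp'] j]
    by simp
  then show supp_eq: "msupport sv M = msupport sv M'"
    unfolding msupport_def by auto
  have "annihilates (M\<lparr>mcar := S\<rparr>) (eidem (- ?i))"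
    using M'.sink_part_annihilated[OF i] amod_isom_annihilates_iff[OF Y M.submod_is_amod[OF S] Y']
      M.eidem_in_AA[OF sci] by (simp add: sink_sub_def)
  moreover have "annihilates (quotmod M S) (eidem ?i)"
    using M'.corner_annihilated[OF i] quotmod_isom_annihilates_iff[OF X M S X']
      M.eidem_in_AA[OF si] by (simp add: sink_quot_def)
  ultimately show "S = mcar (sink_sub M)"
    using M.submod_eq_part[OF S si] supp_eq by (simp add: sink_sub_def)
qed

end

section \<open>Isoclasses and Hall numbers\<close>

context acyclic_quiver_aut
begin

lemma equiv_isorel:
  "equiv (AMods src tgt sv se q)
    (isorel src tgt sv se q :: ((('v,'e) qpath \<Rightarrow> 'k::field, nat) amod \<times> _) set)"
proof (rule equivI)
  show "refl_on (AMods src tgt sv se q)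
      (isorel src tgt sv se q :: ((('v,'e) qpath \<Rightarrow> 'k, nat) amod \<times> _) set)"
    by (auto simp: refl_on_def isorel_def amod_isom_def intro: amod_iso_id)
  show "sym (isorel src tgt sv se q :: ((('v,'e) qpath \<Rightarrow> 'k, nat) amod \<times> _) set)"
    unfolding sym_def isorel_def AMods_def using amod_isom_sym by blast
  show "trans (isorel src tgt sv se q :: ((('v,'e) qpath \<Rightarrow> 'k, nat) amod \<times> _) set)"
    unfolding trans_def isorel_def AMods_def using amod_isom_trans by blast
qed (auto simp: isorel_def)

lemma isorel_class_eq_iff:
  fixes M M' :: "(('v,'e) qpath \<Rightarrow> 'k::field, nat) amod"
  assumes "M \<in> AMods src tgt sv se q" "M' \<in> AMods src tgt sv se q"
  shows "isorel src tgt sv se q `` {M} = isorel src tgt sv se q `` {M'} \<longleftrightarrow>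
    amod_isom (Alg src tgt sv se q) M M'"
  using equiv_class_eq_iff[OF equiv_isorel] assms by (auto simp: isorel_def)

lemma isorel_class_in_isoclasses:
  fixes M :: "(('v,'e) qpath \<Rightarrow> 'k::field, nat) amod"
  shows "M \<in> AMods src tgt sv se q \<Longrightarrow> isorel src tgt sv se q `` {M} \<in> isoclasses src tgt sv se q"
  unfolding isoclasses_def by (rule quotientI)

lemma crep_isoclass:
  fixes C :: "(('v,'e) qpath \<Rightarrow> 'k::field, nat) amod set"
  assumes C: "C \<in> isoclasses src tgt sv se q"
  shows "crep C \<in> AMods src tgt sv se q" "C = isorel src tgt sv se q `` {crep C}"
proof -
  obtain M0 where M0: "M0 \<in> AMods src tgt sv se q" "C = isorel src tgt sv se q `` {M0}"
    using C unfolding isoclasses_def by (auto elim: quotientE)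
  then have "M0 \<in> C" using equiv_class_self[OF equiv_isorel] by simp
  then have "crep C \<in> C" unfolding crep_def by (rule someI)
  then have "(M0, crep C) \<in> isorel src tgt sv se q" using M0 by simp
  then show "crep C \<in> AMods src tgt sv se q" "C = isorel src tgt sv se q `` {crep C}"
    using M0(2) equiv_class_eq[OF equiv_isorel, of M0 "crep C"] by (auto simp: isorel_def)
qed

lemma isom_crep_isorel_class:
  fixes M :: "(('v,'e) qpath \<Rightarrow> 'k::field, nat) amod"
  assumes "M \<in> AMods src tgt sv se q"
  shows "amod_isom (Alg src tgt sv se q) M (crep (isorel src tgt sv se q `` {M}))"
  using crep_isoclass[OF isorel_class_in_isoclasses[OF assms]] isorel_class_eq_iff assms by metis

lemma isom_crep_iff:
  fixes M :: "(('v,'e) qpath \<Rightarrow> 'k::field, nat) amod" and P :: "(('v,'e) qpath \<Rightarrow> 'k, 'm) amod"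
  assumes "M \<in> AMods src tgt sv se q"
  shows "amod_isom (Alg src tgt sv se q) P (crep (isorel src tgt sv se q `` {M})) \<longleftrightarrow>
    amod_isom (Alg src tgt sv se q) P M"
  using isom_crep_isorel_class[OF assms] amod_isom_sym
    crep_isoclass(1)[OF isorel_class_in_isoclasses[OF assms]]
    amod_isom_trans assms unfolding AMods_def by blast

lemma isorel_class_ne_zclass:
  fixes M :: "(('v,'e) qpath \<Rightarrow> 'k::field, nat) amod"
  assumes M: "M \<in> AMods src tgt sv se q" and nonzero: "\<exists>y\<in>mcar M. y \<noteq> mzero M"
  shows "isorel src tgt sv se q `` {M} \<noteq> zclass src tgt sv se q"
proof
  interpret M: amodule src tgt sv se q N M using M unfolding AMods_def by (simp add: amoduleI)
  assume "isorel src tgt sv se q `` {M} = zclass src tgt sv se q"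
  then have "M \<in> isorel src tgt sv se q `` {zmod}"
    using M equiv_class_self[OF equiv_isorel] unfolding zclass_def by blast
  then have "card (mcar (zmod :: (('v,'e) qpath \<Rightarrow> 'k, nat) amod)) = card (mcar M)"
    unfolding isorel_def amod_isom_def using amod_iso_card_eq by blast
  moreover have "card (mcar M) \<noteq> 1"
    using nonzero M.zero_closed by (metis card_1_singletonE singletonD)
  ultimately show False by (simp add: zmod_def)
qed

text \<open>Ordered as the indices of \<open>hall_num\<close>: quotient first, submodule second.\<close>
definition sink_factors :: "(('v,'e) qpath \<Rightarrow> 'k::field, nat) amod \<Rightarrow>
    (('v,'e) qpath \<Rightarrow> 'k, nat) amod set \<times> (('v,'e) qpath \<Rightarrow> 'k, nat) amod set" where
  "sink_factors M =
    (isorel src tgt sv se q `` {sink_quot M}, isorel src tgt sv se q `` {sink_sub M})"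

lemma sink_factors_eq_iff:
  fixes M M' :: "(('v,'e) qpath \<Rightarrow> 'k::field, nat) amod"
  assumes M: "is_amod src tgt sv se q M" "msupport sv M \<noteq> {}"
    and M': "is_amod src tgt sv se q M'" "msupport sv M' \<noteq> {}"
  shows "sink_factors M' = sink_factors M \<longleftrightarrow>
    amod_isom (Alg src tgt sv se q) (sink_sub M) (sink_sub M') \<and>
    amod_isom (Alg src tgt sv se q) (sink_quot M) (sink_quot M')"
  unfolding sink_factors_def AMods_def
  using isorel_class_eq_iff[of "sink_sub M" "sink_sub M'"]
    isorel_class_eq_iff[of "sink_quot M" "sink_quot M'"]
    sink_sub_is_amod[OF M] sink_sub_is_amod[OF M'] sink_quot_is_amod[OF M] sink_quot_is_amod[OF M']
  by (auto simp: AMods_def)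

lemma hall_num_sink_factors:
  fixes M M' :: "(('v,'e) qpath \<Rightarrow> 'k::field, nat) amod"
  assumes M: "is_amod src tgt sv se q M" "msupport sv M \<noteq> {}"
    and M': "is_amod src tgt sv se q M'" "msupport sv M' \<noteq> {}"
  shows "hall_num (Alg src tgt sv se q) M
      (crep (fst (sink_factors M'))) (crep (snd (sink_factors M'))) =
    (if sink_factors M' = sink_factors M then 1 else 0)"
proof -
  let ?A = "Alg src tgt sv se q"
  let ?SS = "{S. submod ?A M S \<and> amod_isom ?A (M\<lparr>mcar := S\<rparr>) (sink_sub M') \<and>
                 amod_isom ?A (quotmod M S) (sink_quot M')}"
  have "amod_isom ?A P (crep (isorel src tgt sv se q `` {sink_sub M'})) \<longleftrightarrow>
      amod_isom ?A P (sink_sub M')" for P :: "(('v,'e) qpath \<Rightarrow> 'k, nat) amod"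
    using isom_crep_iff sink_sub_is_amod[OF M'] by (simp add: AMods_def)
  moreover have "amod_isom ?A P (crep (isorel src tgt sv se q `` {sink_quot M'})) \<longleftrightarrow>
      amod_isom ?A P (sink_quot M')" for P :: "(('v,'e) qpath \<Rightarrow> 'k, nat set) amod"
    using isom_crep_iff sink_quot_is_amod[OF M'] by (simp add: AMods_def)
  ultimately have
    "hall_num ?A M (crep (fst (sink_factors M'))) (crep (snd (sink_factors M'))) = card ?SS"
    unfolding hall_num_def sink_factors_def by simp
  moreover have "?SS = (if sink_factors M' = sink_factors M then {mcar (sink_sub M)} else {})"
  proof -
    have sub_eq: "M\<lparr>mcar := mcar (sink_sub M)\<rparr> = sink_sub M" by (simp add: sink_sub_def)
    have "sink_factors M' = sink_factors M" if "S \<in> ?SS" for S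
    proof -
      have "S = mcar (sink_sub M)"
        using that sink_sub_unique[OF M(1) M'] by blast
      then show ?thesis
        using that sub_eq sink_factors_eq_iff[OF M M'] amod_isom_trans sink_quot_isom_quotmod[OF M]
        by auto
    qed
    moreover have "mcar (sink_sub M) \<in> ?SS" if "sink_factors M' = sink_factors M"
      using that sub_eq sink_factors_eq_iff[OF M M'] amod_isom_trans submod_sink_sub[OF M]
        quotmod_isom_sink_quot[OF M] by auto
    ultimately show ?thesis
      using sink_sub_unique(2)[OF M(1) M'] by auto
  qed
  ultimately show ?thesis by simp
qed

lemma sum_hall_num_sink_factors_eq_1:
  fixes Ms :: "(('v,'e) qpath \<Rightarrow> 'k::field, nat) amod set"
  assumes "finite Ms" "M \<in> Ms"
    and Ms: "\<And>M'. M' \<in> Ms \<Longrightarrow> is_amod src tgt sv se q M' \<and> msupport sv M' \<noteq> {}"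
  shows "(\<Sum>w\<in>sink_factors ` Ms.
      of_nat (hall_num (Alg src tgt sv se q) M (crep (fst w)) (crep (snd w)))) =
    (1 :: 'a::semiring_1)"
proof -
  have "(\<Sum>w\<in>sink_factors ` Ms.
        of_nat (hall_num (Alg src tgt sv se q) M (crep (fst w)) (crep (snd w)))) =
      (\<Sum>w\<in>sink_factors ` Ms. if w = sink_factors M then 1 else 0 :: 'a)"
  proof (rule sum.cong[OF refl])
    fix w assume "w \<in> sink_factors ` Ms"
    then obtain M' where "M' \<in> Ms" "w = sink_factors M'" by auto
    then show "of_nat (hall_num (Alg src tgt sv se q) M (crep (fst w)) (crep (snd w))) =
        (if w = sink_factors M then 1 else 0 :: 'a)"
      using hall_num_sink_factors[of M M'] Ms[of M] Ms[of M'] \<open>M \<in> Ms\<close> by simp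
  qed
  then show ?thesis using assms(1,2) by simp
qed

lemma sink_factors_nontrivial:
  fixes M :: "(('v,'e) qpath \<Rightarrow> 'k::field, nat) amod"
  assumes M: "is_amod src tgt sv se q M"
    and two: "j \<in> msupport sv M" "j' \<in> msupport sv M" "j \<noteq> j'"
  shows "fst (sink_factors M) \<in> isoclasses src tgt sv se q"
    "fst (sink_factors M) \<noteq> zclass src tgt sv se q"
    "snd (sink_factors M) \<in> isoclasses src tgt sv se q"
    "snd (sink_factors M) \<noteq> zclass src tgt sv se q"
proof -
  interpret M: amodule src tgt sv se q N M by (rule amoduleI[OF M])
  have supp: "msupport sv M \<noteq> {}" using two by auto
  let ?i = "sink_orbit (msupport sv M)"
  have i: "is_sink_orbit (msupport sv M) ?i" using is_sink_orbit_msupport[OF M supp] .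
  obtain j0 where j0: "j0 \<in> msupport sv M" "j0 \<noteq> ?i" using two by metis
  have Y: "sink_sub M \<in> AMods src tgt sv se q" and X: "sink_quot M \<in> AMods src tgt sv se q"
    using sink_sub_is_amod[OF M supp] sink_quot_is_amod[OF M supp] by (auto simp: AMods_def)
  show "fst (sink_factors M) \<in> isoclasses src tgt sv se q"
    "snd (sink_factors M) \<in> isoclasses src tgt sv se q"
    unfolding sink_factors_def using isorel_class_in_isoclasses X Y by auto
  show "fst (sink_factors M) \<noteq> zclass src tgt sv se q"
    unfolding sink_factors_def sink_quot_def
    using isorel_class_ne_zclass[OF X[unfolded sink_quot_def]] M.corner_nontrivial[OF i j0] by simp
  show "snd (sink_factors M) \<noteq> zclass src tgt sv se q"
    unfolding sink_factors_def
    using isorel_class_ne_zclass[OF Y]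
      M.part_nontrivial[OF i[unfolded is_sink_orbit_def, THEN conjunct1]]
    by (simp add: sink_sub_def)
qed

end

section \<open>Primitive elements of fundamental degree\<close>

lemma sum_eq_0_by_partition_of_unity:
  fixes g :: "'a \<Rightarrow> 'c::comm_semiring_1"
  assumes unity: "\<And>C. C \<in> P \<Longrightarrow> (\<Sum>w\<in>T. F C w) = 1"
    and zero: "\<And>w. w \<in> T \<Longrightarrow> (\<Sum>C\<in>P. g C * F C w) = 0"
  shows "(\<Sum>C\<in>P. g C) = 0"
proof -
  have "(\<Sum>C\<in>P. g C) = (\<Sum>C\<in>P. \<Sum>w\<in>T. g C * F C w)"
    using unity by (simp add: sum_distrib_left[symmetric])
  also have "\<dots> = (\<Sum>w\<in>T. \<Sum>C\<in>P. g C * F C w)"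
    by (rule sum.swap)
  finally show ?thesis using zero by simp
qed

context acyclic_quiver_aut
begin

text \<open>No arrow of \<open>\<Gamma>\<close> is a loop, so only the diagonal term survives.\<close>
lemma symform_unitv_single_support:
  assumes i: "i \<in> Iset sv" and supp: "\<And>j. \<alpha> j \<noteq> 0 \<Longrightarrow> j = i"
  shows "symform src tgt sv se \<alpha> (unitv i) = 2 * int (card i) * \<alpha> i"
proof -
  have diag: "(\<Sum>j\<in>Iset sv. int (card j) * f j * g j) = int (card i) * \<alpha> i"
    if "\<And>j. f j * g j = (if j = i then \<alpha> i else 0)" for f g :: "'v set \<Rightarrow> int"
  proof -
    have "(\<Sum>j\<in>Iset sv. int (card j) * f j * g j) =
        (\<Sum>j\<in>Iset sv. if j = i then int (card i) * \<alpha> i else 0)"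
      by (rule sum.cong) (simp_all add: mult.assoc that)
    then show ?thesis using i by simp
  qed
  have arrows: "(\<Sum>\<rho>\<in>Gam1 se. int (card \<rho>) * f (torb src sv \<rho>) * g (horb tgt sv \<rho>)) = 0"
    if "\<And>k l. k \<noteq> l \<Longrightarrow> f k * g l = 0" for f g :: "'v set \<Rightarrow> int"
    by (simp add: mult.assoc that[OF torb_ne_horb])
  have "\<alpha> j * unitv i j = (if j = i then \<alpha> i else 0)" "unitv i j * \<alpha> j = (if j = i then \<alpha> i else 0)"
    for j using supp by (auto simp: unitv_def)
  moreover have "\<alpha> k * unitv i l = 0" "unitv i k * \<alpha> l = 0" if "k \<noteq> l" for k l
    using supp that by (auto simp: unitv_def)
  ultimately show ?thesis
    unfolding symform_def euler_def by (simp add: diag arrows)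
qed

lemma fundamental_set_two_orbits:
  assumes "\<alpha> \<in> fundamental_set src tgt sv se"
  obtains j j' where "j \<in> Iset sv" "j' \<in> Iset sv" "\<alpha> j \<noteq> 0" "\<alpha> j' \<noteq> 0" "j \<noteq> j'"
proof -
  have nonneg: "\<And>i. 0 \<le> \<alpha> i" and out: "\<And>i. i \<notin> Iset sv \<Longrightarrow> \<alpha> i = 0"
    and conn: "gamma_connected src tgt sv se {i \<in> Iset sv. \<alpha> i \<noteq> 0}"
    and neg: "\<And>i. i \<in> Iset sv \<Longrightarrow> symform src tgt sv se \<alpha> (unitv i) \<le> 0"
    using assms unfolding fundamental_set_def by auto
  obtain i where i: "i \<in> Iset sv" "\<alpha> i \<noteq> 0" using conn unfolding gamma_connected_def by auto
  have "\<exists>j. j \<in> Iset sv \<and> \<alpha> j \<noteq> 0 \<and> j \<noteq> i"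
  proof (rule ccontr)
    assume "\<not> ?thesis"
    then have "j = i" if "\<alpha> j \<noteq> 0" for j
      using that out by metis
    then have "symform src tgt sv se \<alpha> (unitv i) = 2 * int (card i) * \<alpha> i"
      by (rule symform_unitv_single_support[OF i(1)])
    moreover have "0 < int (card i) * \<alpha> i"
      using card_Iset_pos[OF i(1)] nonneg[of i] i by (intro mult_pos_pos) auto
    ultimately show False using neg[OF i(1)] by simp
  qed
  then show thesis using that i by blast
qed

text \<open>If \<open>e_j\<close> kills \<open>M\<close> then \<open>e_j M\<close> has one element, and since \<open>q > 1\<close> the description
  in \<open>dimv\<close> forces the exponent to be \<open>0\<close>.\<close>
lemma dimv_ne_0_imp_msupport:
  fixes M :: "(('v,'e) qpath \<Rightarrow> 'k::field, 'm) amod"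
  assumes M: "is_amod src tgt sv se q M" and j: "j \<in> Iset sv" and d: "dimv sv q M j \<noteq> 0"
  shows "j \<in> msupport sv M"
proof (rule ccontr)
  interpret M: amodule src tgt sv se q N M by (rule amoduleI[OF M])
  assume "j \<notin> msupport sv M"
  then have "\<forall>x\<in>M.car. M.sm (M.E j) x = M.z"
    using j unfolding msupport_def annihilates_def by auto
  then have "M.part j = (\<lambda>_. M.z) ` M.car" by (simp cong: image_cong)
  then have "M.part j = {M.z}" using M.zero_closed by (simp add: image_constant)
  then have card: "card (M.part j) = 1" by simp
  have pow_ne_1: "q ^ (card j * d) \<noteq> 1" if "d \<noteq> 0" for d
  proof -
    have "0 < card j * d" using that card_Iset_pos[OF j] by simp
    then have "1 < q ^ (card j * d)" using q_ge_2 by (intro one_less_power) auto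
    then show ?thesis by linarith
  qed
  have "(THE d. card (M.part j) = q ^ (card j * d)) = 0"
  proof (rule the_equality)
    show "d = 0" if "card (M.part j) = q ^ (card j * d)" for d
      using pow_ne_1[of d] that card by argo
  qed (simp add: card)
  then show False using d j unfolding dimv_def by simp
qed

lemma crep_classes_dim:
  assumes "C \<in> classes_dim src tgt sv se q \<alpha>"
  shows "is_amod src tgt sv se q (crep C)"
    and "j \<in> Iset sv \<Longrightarrow> \<alpha> j \<noteq> 0 \<Longrightarrow> j \<in> msupport sv (crep C)"
  using assms crep_isoclass(1) dimv_ne_0_imp_msupport
  unfolding classes_dim_def AMods_def by auto

lemma hall_I_eq_sum_nonzero:
  fixes x :: "(('v,'e) qpath \<Rightarrow> 'k::field, nat) amod set \<Rightarrow> complex"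
  assumes "x \<in> hall_hom src tgt sv se q \<alpha>"
    and "finite (classes_dim src tgt sv se q \<alpha> :: (('v,'e) qpath \<Rightarrow> 'k, nat) amod set set)"
  shows "hall_I src tgt sv se q \<alpha> x =
    (\<Sum>C\<in>{C \<in> isoclasses src tgt sv se q. x C \<noteq> 0}.
      x C / of_nat (aut_num (Alg src tgt sv se q) (crep C)))"
  unfolding hall_I_def using assms
  by (intro sum.mono_neutral_right) (auto simp: hall_hom_def classes_dim_def)

text \<open>The coefficient of \<open>[X] \<otimes> [Y]\<close> in \<open>\<Delta>(x)\<close> is a nonzero multiple of this sum.\<close>
lemma hall_prim_sum_hall_num_eq_0:
  assumes x: "x \<in> hall_prim src tgt sv se q \<alpha>"
    and X: "X \<in> isoclasses src tgt sv se q" "X \<noteq> zclass src tgt sv se q"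
    and Y: "Y \<in> isoclasses src tgt sv se q" "Y \<noteq> zclass src tgt sv se q"
  shows "(\<Sum>C\<in>{C \<in> isoclasses src tgt sv se q. x C \<noteq> 0}.
     x C / of_nat (aut_num (Alg src tgt sv se q) (crep C)) *
       of_nat (hall_num (Alg src tgt sv se q) (crep C) (crep X) (crep Y))) = 0"
proof -
  let ?A = "Alg src tgt sv se q"
  define K where "K = complex_of_real (sqrt (real q)) powi
      euler src tgt sv se (dimv sv q (crep X)) (dimv sv q (crep Y))
      * of_nat (aut_num ?A (crep X)) * of_nat (aut_num ?A (crep Y))"
  have "is_amod src tgt sv se q (crep X)" "is_amod src tgt sv se q (crep Y)"
    using crep_isoclass(1) X(1) Y(1) unfolding AMods_def by auto
  then have "K \<noteq> 0"
    unfolding K_def using q_ge_2 aut_num_pos[of "crep X"] aut_num_pos[of "crep Y"] by simp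
  moreover have "hall_coprod src tgt sv se q x X Y =
      K * (\<Sum>C\<in>{C \<in> isoclasses src tgt sv se q. x C \<noteq> 0}.
        x C / of_nat (aut_num ?A (crep C)) * of_nat (hall_num ?A (crep C) (crep X) (crep Y)))"
    unfolding hall_coprod_def Let_def sum_distrib_left K_def
    by (rule sum.cong[OF refl]) (simp add: divide_inverse ac_simps)
  moreover have "hall_coprod src tgt sv se q x X Y = 0"
    using x X Y unfolding hall_prim_def by simp
  ultimately show ?thesis by simp
qed

theorem hall_I_hall_prim_fundamental_eq_0:
  fixes x :: "(('v,'e) qpath \<Rightarrow> 'k::field, nat) amod set \<Rightarrow> complex"
  assumes \<alpha>: "\<alpha> \<in> fundamental_set src tgt sv se" and x: "x \<in> hall_prim src tgt sv se q \<alpha>"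
  shows "hall_I src tgt sv se q \<alpha> x = 0"
proof (cases "finite (classes_dim src tgt sv se q \<alpha> :: (('v,'e) qpath \<Rightarrow> 'k, nat) amod set set)")
  case False
  \<comment> \<open>the sum defining \<open>hall_I\<close> then has the junk value \<open>0\<close>\<close>
  then show ?thesis unfolding hall_I_def by simp
next
  case True
  let ?A = "Alg src tgt sv se q"
  define P where "P = {C \<in> isoclasses src tgt sv se q. x C \<noteq> 0}"
  have x_hom: "x \<in> hall_hom src tgt sv se q \<alpha>" using x unfolding hall_prim_def by simp
  then have "finite P" unfolding P_def hall_hom_def by (auto elim: finite_subset[rotated])
  have P_dim: "C \<in> classes_dim src tgt sv se q \<alpha>" if "C \<in> P" for C
    using that x_hom unfolding P_def hall_hom_def by auto
  obtain j j' where j: "j \<in> Iset sv" "j' \<in> Iset sv" "\<alpha> j \<noteq> 0" "\<alpha> j' \<noteq> 0" "j \<noteq> j'"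
    using fundamental_set_two_orbits[OF \<alpha>] .
  note crep_P = crep_classes_dim[OF P_dim]
  have "hall_I src tgt sv se q \<alpha> x = (\<Sum>C\<in>P. x C / of_nat (aut_num ?A (crep C)))"
    unfolding P_def using hall_I_eq_sum_nonzero[OF x_hom True] .
  also have "\<dots> = 0"
  proof (rule sum_eq_0_by_partition_of_unity)
    fix C assume "C \<in> P"
    then show "(\<Sum>w\<in>sink_factors ` crep ` P.
        of_nat (hall_num ?A (crep C) (crep (fst w)) (crep (snd w)))) = (1 :: complex)"
      using \<open>finite P\<close> crep_P j by (intro sum_hall_num_sink_factors_eq_1) auto
  next
    fix w assume "w \<in> sink_factors ` crep ` P"
    then obtain C' where C': "C' \<in> P" "w = sink_factors (crep C')" by auto
    show "(\<Sum>C\<in>P. x C / of_nat (aut_num ?A (crep C)) *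
        of_nat (hall_num ?A (crep C) (crep (fst w)) (crep (snd w)))) = 0"
      unfolding P_def C'(2)
      using hall_prim_sum_hall_num_eq_0[OF x sink_factors_nontrivial[OF crep_P(1)[OF C'(1)]
          crep_P(2)[OF C'(1) j(1,3)] crep_P(2)[OF C'(1) j(2,4)] j(5)]] .
  qed
  finally show ?thesis .
qed

end

theorem proposition2p3:
  fixes src tgt :: "'e::finite \<Rightarrow> 'v::finite"
    and sv :: "'v \<Rightarrow> 'v" and se :: "'e \<Rightarrow> 'e"
    and q N :: nat
    and \<alpha> :: "'v set \<Rightarrow> int"
    and x :: "(('v,'e) qpath \<Rightarrow> 'k::{field,finite}, nat) amod set \<Rightarrow> complex"
  assumes "quiver_aut src tgt sv se"
    and "quiver_acyclic src tgt"
    and "\<exists>p e. prime p \<and> 0 < e \<and> q = p ^ e"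
    and "0 < N" and "card (UNIV :: 'k set) = q ^ N"
    and "\<forall>v. (sv ^^ N) v = v" and "\<forall>a. (se ^^ N) a = a"
    and "\<alpha> \<in> fundamental_set src tgt sv se"
    and "x \<in> hall_prim src tgt sv se q \<alpha>"
  shows "hall_I src tgt sv se q \<alpha> x = 0"
proof -
  obtain p e where pe: "prime p" "0 < e" "q = p ^ e" using assms(3) by blast
  then have "2 \<le> q" using prime_ge_2_nat[OF pe(1)] self_le_power[of p e] by simp
  then interpret acyclic_quiver_aut src tgt sv se q N
    using assms by unfold_locales auto
  show ?thesis using hall_I_hall_prim_fundamental_eq_0 assms(8,9) .
qed

end
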